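(* Let $a<0$, $c<0$, $a_2>0$, $c_2>0$, $b>0$, $b_2>0$, let $0<|\omega|<\min\left\{1,\frac{-a}{b},\frac{-c}{b},\frac{a_2}{b_2},\frac{c_2}{b_2}\right\}$, and let $F:\mathbb{R}^4\to\mathbb{R}$ be $C^2$ with $F(0)=0$ satisfying conditions (a), (b), (c) of the context. If $((\psi_n,v_n))_n$ is any minimizing sequence for $S(\omega)$ (that is, $(\psi_n,v_n)\in\mathcal M_\omega\setminus\{0\}$ and $J_\omega(\psi_n,v_n)\to S(\omega)$), then $(I_\omega(\psi_n,v_n))_n$ is a bounded sequence. Moreover, there is $L>0$ such that, up to a subsequence, $I_\omega(\psi_n,v_n)\to L$ as $n\to\infty$.
   Context: $X=H^2(\mathbb{R})\times H^2(\mathbb{R})$. For $(\psi,v)\in X$: $I_1(\psi,v)=\int_{\mathbb R}[\psi^2-c(\psi')^2+c_2(\psi'')^2+v^2-a(v')^2+a_2(v'')^2]\,dx$, $I_2(\psi,v)=\int_{\mathbb R}(\psi v+b\psi'v'+b_2\psi''v'')\,dx$, $I_\omega=I_1-2\omega I_2$. $F:\mathbb{R}^4\to\mathbb{R}$ is $C^2$, $F(0)=0$, $G(w)=w\cdot\nabla F(w)$. Conditions: (a) there is $p>0$ with $w\cdot\nabla G(w)\ge(p+2)G(w)$ for all $w\in\mathbb{R}^4$; (b) there exist $0<q_1\le q_2<\infty$, $C>0$ with $|D^2F(w)|\le C(|w|^{q_1}+|w|^{q_2})$; (c) there exist $u,v\in H^2(\mathbb{R})$ with $\int_{\mathbb R}F(u,u',v,v')\,dx>0$.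 $K(\psi,v)=\int F(\psi,\psi',v,v')\,dx$, $N(\psi,v)=\int G(\psi,\psi',v,v')\,dx$, $J_\omega=\tfrac12I_\omega-K$, $P_\omega=I_\omega-N$, $\mathcal M_\omega=\{(\psi,v)\in X:P_\omega(\psi,v)=0\}$, $S(\omega)=\inf\{J_\omega(\psi,v):(\psi,v)\in\mathcal M_\omega\setminus\{0\}\}$. *)

theory Defs
  imports "HOL-Analysis.Analysis"
begin

definition L2 :: "(real \<Rightarrow> real) \<Rightarrow> bool" where
  "L2 u \<longleftrightarrow> u \<in> borel_measurable lborel \<and> integrable lborel (\<lambda>x. (u x)^2)"

definition test_fun :: "(real \<Rightarrow> real) \<Rightarrow> bool" where
  "test_fun \<phi> \<longleftrightarrow> (\<forall>k x. ((deriv ^^ k) \<phi>) differentiable (at x)) \<and> bounded {x. \<phi> x \<noteq> 0}"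

definition weak_deriv_of :: "(real \<Rightarrow> real) \<Rightarrow> (real \<Rightarrow> real) \<Rightarrow> bool" where
  "weak_deriv_of w u \<longleftrightarrow>
     (\<forall>\<phi>. test_fun \<phi> \<longrightarrow>
        (\<integral>x. u x * deriv \<phi> x \<partial>lborel) = - (\<integral>x. w x * \<phi> x \<partial>lborel))"

definition H2 :: "(real \<Rightarrow> real) \<Rightarrow> bool" where
  "H2 u \<longleftrightarrow> L2 u \<and> (\<exists>u1 u2. L2 u1 \<and> L2 u2 \<and> weak_deriv_of u1 u \<and> weak_deriv_of u2 u1)"

text \<open>First and second weak derivatives (determined up to null sets).\<close>
definition wd1 :: "(real \<Rightarrow> real) \<Rightarrow> real \<Rightarrow> real" where
  "wd1 u = (SOME u1. L2 u1 \<and> weak_deriv_of u1 u \<and> (\<exists>u2. L2 u2 \<and> weak_deriv_of u2 u1))"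

definition wd2 :: "(real \<Rightarrow> real) \<Rightarrow> real \<Rightarrow> real" where
  "wd2 u = (SOME u2. L2 u2 \<and> weak_deriv_of u2 (wd1 u))"

definition grad :: "(real^4 \<Rightarrow> real) \<Rightarrow> real^4 \<Rightarrow> real^4" where
  "grad F w = (\<chi> i. frechet_derivative F (at w) (axis i 1))"

definition hess :: "(real^4 \<Rightarrow> real) \<Rightarrow> real^4 \<Rightarrow> real^4^4" where
  "hess F w = (\<chi> i j. frechet_derivative (grad F) (at w) (axis j 1) $ i)"

definition C2_R4 :: "(real^4 \<Rightarrow> real) \<Rightarrow> bool" where
  "C2_R4 F \<longleftrightarrow> (\<forall>w. F differentiable (at w)) \<and> (\<forall>w. grad F differentiable (at w))
                 \<and> continuous_on UNIV (hess F)"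

definition Gfun :: "(real^4 \<Rightarrow> real) \<Rightarrow> real^4 \<Rightarrow> real" where
  "Gfun F w = w \<bullet> grad F w"

definition vec4 :: "real \<Rightarrow> real \<Rightarrow> real \<Rightarrow> real \<Rightarrow> real^4" where
  "vec4 p q r s = vector [p, q, r, s]"

definition I1 :: "real \<Rightarrow> real \<Rightarrow> real \<Rightarrow> real \<Rightarrow> (real \<Rightarrow> real) \<Rightarrow> (real \<Rightarrow> real) \<Rightarrow> real" where
  "I1 a a2 c c2 \<psi> v = (\<integral>x. (\<psi> x)^2 - c * (wd1 \<psi> x)^2 + c2 * (wd2 \<psi> x)^2
                         + (v x)^2 - a * (wd1 v x)^2 + a2 * (wd2 v x)^2 \<partial>lborel)"

definition I2 :: "real \<Rightarrow> real \<Rightarrow> (real \<Rightarrow> real) \<Rightarrow> (real \<Rightarrow> real) \<Rightarrow> real" where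
  "I2 b b2 \<psi> v = (\<integral>x. \<psi> x * v x + b * wd1 \<psi> x * wd1 v x + b2 * wd2 \<psi> x * wd2 v x \<partial>lborel)"

definition Iom :: "real \<Rightarrow> real \<Rightarrow> real \<Rightarrow> real \<Rightarrow> real \<Rightarrow> real \<Rightarrow> real
                   \<Rightarrow> (real \<Rightarrow> real) \<Rightarrow> (real \<Rightarrow> real) \<Rightarrow> real" where
  "Iom a a2 c c2 b b2 \<omega> \<psi> v = I1 a a2 c c2 \<psi> v - 2 * \<omega> * I2 b b2 \<psi> v"

definition Kfun :: "(real^4 \<Rightarrow> real) \<Rightarrow> (real \<Rightarrow> real) \<Rightarrow> (real \<Rightarrow> real) \<Rightarrow> real" where
  "Kfun F \<psi> v = (\<integral>x. F (vec4 (\<psi> x) (wd1 \<psi> x) (v x) (wd1 v x)) \<partial>lborel)"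

definition Nfun :: "(real^4 \<Rightarrow> real) \<Rightarrow> (real \<Rightarrow> real) \<Rightarrow> (real \<Rightarrow> real) \<Rightarrow> real" where
  "Nfun F \<psi> v = (\<integral>x. Gfun F (vec4 (\<psi> x) (wd1 \<psi> x) (v x) (wd1 v x)) \<partial>lborel)"

definition Jom where
  "Jom a a2 c c2 b b2 F \<omega> \<psi> v = Iom a a2 c c2 b b2 \<omega> \<psi> v / 2 - Kfun F \<psi> v"

definition Pom where
  "Pom a a2 c c2 b b2 F \<omega> \<psi> v = Iom a a2 c c2 b b2 \<omega> \<psi> v - Nfun F \<psi> v"

text \<open>Nehari manifold minus zero (zero in X means a.e. zero).\<close>
definition Mnz where
  "Mnz a a2 c c2 b b2 F \<omega> = {(\<psi>, v). H2 \<psi> \<and> H2 v \<and> Pom a a2 c c2 b b2 F \<omega> \<psi> v = 0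
                                \<and> \<not> (AE x in lborel. \<psi> x = 0 \<and> v x = 0)}"

definition Sval where
  "Sval a a2 c c2 b b2 F \<omega> =
     Inf ((\<lambda>(\<psi>, v). Jom a a2 c c2 b b2 F \<omega> \<psi> v) ` Mnz a a2 c c2 b b2 F \<omega>)"

end

theory Submission
  imports Defs "HOL-Computational_Algebra.Polynomial"
begin

text \<open>On the Nehari manifold \<open>I\<^sub>\<omega> = N\<close>. For small \<open>|\<omega>|\<close> the quadratic form is coercive,
  \<open>I\<^sub>\<omega> \<ge> \<delta> \<parallel>(\<psi>, v)\<parallel>\<^sup>2\<^sub>X\<close>. Integrating condition (a) along rays gives \<open>(p + 2) F \<le> G\<close>, hence
  \<open>J\<^sub>\<omega> \<ge> p / (2 (p + 2)) I\<^sub>\<omega>\<close> on the manifold, so \<open>I\<^sub>\<omega>\<close> stays bounded along a minimizing sequence.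

  Condition (b) together with \<open>\<nabla>F(0) = 0\<close> (another consequence of (a)) gives
  \<open>|G(w)| \<le> 16 C (|w|\<^sup>q\<^sup>1 + |w|\<^sup>q\<^sup>2) |w|\<^sup>2\<close>, and the embedding \<open>H\<^sup>1(\<real>) \<subseteq> L\<^sup>\<infinity>(\<real>)\<close> bounds the jet
  \<open>(\<psi>, \<psi>', v, v')\<close> pointwise by some \<open>s\<close> proportional to \<open>\<parallel>(\<psi>, v)\<parallel>\<^sub>X\<close>. Thus
  \<open>\<delta> \<parallel>(\<psi>, v)\<parallel>\<^sup>2\<^sub>X \<le> I\<^sub>\<omega> = N \<le> 16 C (s\<^sup>q\<^sup>1 + s\<^sup>q\<^sup>2) \<parallel>(\<psi>, v)\<parallel>\<^sup>2\<^sub>X\<close>, which keeps \<open>s\<close>, and with it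
  \<open>I\<^sub>\<omega>\<close>, uniformly away from 0; a monotone subsequence then has a positive limit.

  The embedding is proved from the definition of weak derivatives alone: tested against smooth
  step functions, the mollifications of \<open>u\<close> converge pointwise to a representative of \<open>u\<close>
  that is bounded in terms of the \<open>H\<^sup>1\<close> norm.\<close>

fun n_times_differentiable :: "nat \<Rightarrow> (real \<Rightarrow> real) \<Rightarrow> bool" where
  "n_times_differentiable 0 f = True"
| "n_times_differentiable (Suc n) f =
     (\<exists>f'. (\<forall>x. (f has_real_derivative f' x) (at x)) \<and> n_times_differentiable n f')"

definition smooth :: "(real \<Rightarrow> real) \<Rightarrow> bool" where
  "smooth f \<longleftrightarrow> (\<forall>n. n_times_differentiable n f)"

lemma n_times_differentiable_SucD: "n_times_differentiable (Suc n) f \<Longrightarrow> n_times_differentiable n f"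
proof (induction n arbitrary: f)
  case (Suc n)
  then obtain f' where "\<forall>x. (f has_real_derivative f' x) (at x)" "n_times_differentiable (Suc n) f'"
    by auto
  with Suc.IH show ?case by auto
qed simp

lemma n_times_differentiable_const: "n_times_differentiable n (\<lambda>x. c)"
  by (induction n arbitrary: c) (auto intro!: exI[of _ "\<lambda>x. 0"] derivative_eq_intros)

lemma n_times_differentiable_add:
  "n_times_differentiable n f \<Longrightarrow> n_times_differentiable n g \<Longrightarrow>
   n_times_differentiable n (\<lambda>x. f x + g x)"
proof (induction n arbitrary: f g)
  case (Suc n)
  then obtain f' g' where "\<forall>x. (f has_real_derivative f' x) (at x)" "n_times_differentiable n f'"
      "\<forall>x. (g has_real_derivative g' x) (at x)" "n_times_differentiable n g'" by auto
  with Suc.IH show ?case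
    by (auto intro!: exI[of _ "\<lambda>x. f' x + g' x"] derivative_eq_intros)
qed simp

lemma n_times_differentiable_mult:
  "n_times_differentiable n f \<Longrightarrow> n_times_differentiable n g \<Longrightarrow>
   n_times_differentiable n (\<lambda>x. f x * g x)"
proof (induction n arbitrary: f g)
  case (Suc n)
  then obtain f' g' where d: "\<forall>x. (f has_real_derivative f' x) (at x)" "n_times_differentiable n f'"
      "\<forall>x. (g has_real_derivative g' x) (at x)" "n_times_differentiable n g'" by auto
  have "n_times_differentiable n f" "n_times_differentiable n g"
    using Suc.prems n_times_differentiable_SucD by auto
  then have "n_times_differentiable n (\<lambda>x. f' x * g x + f x * g' x)"
    using Suc.IH d n_times_differentiable_add by auto
  moreover have "\<forall>x. ((\<lambda>x. f x * g x) has_real_derivative (f' x * g x + f x * g' x)) (at x)"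
    using d by (auto intro!: derivative_eq_intros)
  ultimately show ?case by auto
qed simp

lemma n_times_differentiable_inverse:
  "n_times_differentiable n g \<Longrightarrow> (\<And>x. g x \<noteq> 0) \<Longrightarrow> n_times_differentiable n (\<lambda>x. inverse (g x))"
proof (induction n arbitrary: g)
  case (Suc n)
  then obtain g' where d: "\<forall>x. (g has_real_derivative g' x) (at x)" "n_times_differentiable n g'"
    by auto
  have "n_times_differentiable n (\<lambda>x. inverse (g x))"
    using Suc n_times_differentiable_SucD by auto
  then have "n_times_differentiable n (\<lambda>x. (- 1 * g' x) * (inverse (g x) * inverse (g x)))"
    by (intro n_times_differentiable_mult n_times_differentiable_const d(2))
  moreover have "\<forall>x. ((\<lambda>x. inverse (g x)) has_real_derivative
                      ((- 1 * g' x) * (inverse (g x) * inverse (g x)))) (at x)"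
    using d Suc.prems by (auto intro!: derivative_eq_intros simp: power2_eq_square)
  ultimately show ?case by auto
qed simp

lemma n_times_differentiable_affine:
  "n_times_differentiable n f \<Longrightarrow> n_times_differentiable n (\<lambda>x. f (a * x + b))"
proof (induction n arbitrary: f)
  case (Suc n)
  then obtain f' where d: "\<forall>x. (f has_real_derivative f' x) (at x)" "n_times_differentiable n f'"
    by auto
  have "n_times_differentiable n (\<lambda>x. a * f' (a * x + b))"
    by (intro n_times_differentiable_mult n_times_differentiable_const Suc.IH d(2))
  moreover have "((\<lambda>x. f (a * x + b)) has_real_derivative (a * f' (a * x + b))) (at x)" for x
  proof -
    have "((\<lambda>x. a * x + b) has_real_derivative a) (at x)"
      by (auto intro!: derivative_eq_intros)
    from DERIV_chain2[OF d(1)[rule_format] this] show ?thesis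
      by (simp add: mult.commute)
  qed
  ultimately show ?case by (auto intro!: exI[of _ "\<lambda>x. a * f' (a * x + b)"])
qed simp

lemma n_times_differentiable_Suc_deriv_funpow:
  "n_times_differentiable (Suc k) f \<Longrightarrow> (deriv ^^ k) f differentiable (at x)"
proof (induction k arbitrary: f)
  case 0
  then show ?case by (auto simp: real_differentiable_def)
next
  case (Suc k)
  then obtain f' where d: "\<forall>x. (f has_real_derivative f' x) (at x)" "n_times_differentiable (Suc k) f'"
    by auto
  have "deriv f = f'" using d(1) DERIV_imp_deriv by blast
  then have "(deriv ^^ Suc k) f = (deriv ^^ k) f'"
    by (simp add: funpow_Suc_right del: funpow.simps)
  then show ?case using Suc.IH[OF d(2)] by simp
qed

lemma smooth_deriv_funpow_differentiable: "smooth f \<Longrightarrow> (deriv ^^ k) f differentiable (at x)"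
  using n_times_differentiable_Suc_deriv_funpow smooth_def by blast

lemma smooth_imp_test_fun:
  assumes "smooth f" and "{x. f x \<noteq> 0} \<subseteq> {a..b}"
  shows "test_fun f"
  unfolding test_fun_def
  using assms smooth_deriv_funpow_differentiable bounded_subset[OF bounded_closed_interval] by blast

lemma smooth_const: "smooth (\<lambda>x. c)"
  and smooth_add: "smooth f \<Longrightarrow> smooth g \<Longrightarrow> smooth (\<lambda>x. f x + g x)"
  and smooth_mult: "smooth f \<Longrightarrow> smooth g \<Longrightarrow> smooth (\<lambda>x. f x * g x)"
  and smooth_affine: "smooth f \<Longrightarrow> smooth (\<lambda>x. f (a * x + b))"
  by (simp_all add: smooth_def n_times_differentiable_const n_times_differentiable_add
      n_times_differentiable_mult n_times_differentiable_affine)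

lemma smooth_diff: "smooth f \<Longrightarrow> smooth g \<Longrightarrow> smooth (\<lambda>x. f x - g x)"
  using smooth_add[OF _ smooth_mult[OF smooth_const, of g "- 1"]] by simp

section \<open>A smooth step function and its derivative\<close>

definition expinv :: "real poly \<Rightarrow> real \<Rightarrow> real" where
  "expinv P t = (if 0 < t then poly P (1 / t) * exp (- 1 / t) else 0)"

text \<open>Differentiating \<open>P(1/t) e\<^sup>-\<^sup>1\<^sup>/\<^sup>t\<close> gives \<open>(1/t)\<^sup>2 (P - P')(1/t) e\<^sup>-\<^sup>1\<^sup>/\<^sup>t\<close>.\<close>
definition expinv_deriv_poly :: "real poly \<Rightarrow> real poly" where
  "expinv_deriv_poly P = [:0, 0, 1:] * (P - pderiv P)"

lemma poly_times_exp_neg_tendsto_0: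
  fixes P :: "real poly"
  shows "((\<lambda>x. poly P x * exp (- x)) \<longlongrightarrow> 0) at_top"
proof -
  have "((\<lambda>x. \<Sum>i\<le>degree P. coeff P i * (x ^ i / exp x)) \<longlongrightarrow> (\<Sum>i\<le>degree P. coeff P i * 0)) at_top"
    by (intro tendsto_sum tendsto_mult tendsto_const tendsto_power_div_exp_0)
  moreover have "(\<lambda>x. \<Sum>i\<le>degree P. coeff P i * (x ^ i / exp x)) = (\<lambda>x. poly P x * exp (- x))"
    by (simp add: poly_altdef sum_distrib_right exp_minus divide_inverse mult.assoc)
  ultimately show ?thesis by simp
qed

lemma poly_inverse_times_exp_tendsto_0:
  fixes P :: "real poly"
  shows "((\<lambda>t. poly P (1 / t) * exp (- 1 / t)) \<longlongrightarrow> 0) (at_right 0)"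
  using filterlim_compose[OF poly_times_exp_neg_tendsto_0 filterlim_inverse_at_top_right]
  by (simp add: divide_inverse)

lemma expinv_has_derivative_at_0: "(expinv P has_real_derivative 0) (at 0)"
proof -
  have "((\<lambda>y. (expinv P y - expinv P 0) / (y - 0)) \<longlongrightarrow> 0) (at_right 0)"
  proof (rule Lim_transform_eventually)
    show "((\<lambda>t. poly ([:0, 1:] * P) (1 / t) * exp (- 1 / t)) \<longlongrightarrow> 0) (at_right 0)"
      by (rule poly_inverse_times_exp_tendsto_0)
    show "\<forall>\<^sub>F y in at_right 0. poly ([:0, 1:] * P) (1 / y) * exp (- 1 / y) =
                              (expinv P y - expinv P 0) / (y - 0)"
      using eventually_at_right_less[of "0::real"]
      by eventually_elim (simp add: expinv_def field_simps)
  qed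
  moreover have "((\<lambda>y. (expinv P y - expinv P 0) / (y - 0)) \<longlongrightarrow> 0) (at_left 0)"
  proof (rule Lim_transform_eventually)
    show "((\<lambda>t. 0::real) \<longlongrightarrow> 0) (at_left 0)" by simp
    show "\<forall>\<^sub>F y in at_left 0. 0 = (expinv P y - expinv P 0) / (y - 0)"
      using eventually_at_left_real[of "-1" 0] by (simp add: expinv_def eventually_mono)
  qed
  ultimately show ?thesis
    by (simp add: has_field_derivative_iff filterlim_split_at)
qed

lemma expinv_has_derivative: "(expinv P has_real_derivative expinv (expinv_deriv_poly P) t) (at t)"
proof -
  consider "t > 0" | "t < 0" | "t = 0" by linarith
  then show ?thesis
  proof cases
    case 1
    have "((\<lambda>s. poly P (1 / s) * exp (- 1 / s)) has_real_derivative
        (poly (pderiv P) (1 / t) * (- 1 / t\<^sup>2) * exp (- 1 / t) + poly P (1 / t) * (exp (- 1 / t) * (1 / t\<^sup>2))))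
        (at t)"
      using 1 by (auto intro!: derivative_eq_intros simp: power2_eq_square)
    moreover have "poly (pderiv P) (1 / t) * (- 1 / t\<^sup>2) * exp (- 1 / t) + poly P (1 / t) * (exp (- 1 / t) * (1 / t\<^sup>2))
          = expinv (expinv_deriv_poly P) t"
      using 1 by (simp add: expinv_def expinv_deriv_poly_def algebra_simps power2_eq_square)
    ultimately have "((\<lambda>s. poly P (1 / s) * exp (- 1 / s)) has_real_derivative expinv (expinv_deriv_poly P) t) (at t)"
      by simp
    then show ?thesis
      by (rule has_field_derivative_transform_within_open[of _ _ _ "{0<..}"])
         (use 1 in \<open>auto simp: expinv_def\<close>)
  next
    case 2
    have "((\<lambda>s. 0) has_real_derivative expinv (expinv_deriv_poly P) t) (at t)"
      using 2 by (auto simp: expinv_def)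
    then show ?thesis
      by (rule has_field_derivative_transform_within_open[of _ _ _ "{..<0}"])
         (use 2 in \<open>auto simp: expinv_def\<close>)
  next
    case 3
    then show ?thesis using expinv_has_derivative_at_0 by (simp add: expinv_def)
  qed
qed

lemma smooth_expinv: "smooth (expinv P)"
proof -
  have "n_times_differentiable n (expinv P)" for n
    by (induction n arbitrary: P) (use expinv_has_derivative in auto)
  then show ?thesis by (simp add: smooth_def)
qed

lemma expinv_1_pos: "t > 0 \<Longrightarrow> expinv [:1:] t > 0"
  and expinv_1_nonneg: "expinv [:1:] t \<ge> 0"
  by (auto simp: expinv_def)

definition smooth_step :: "real \<Rightarrow> real" where
  "smooth_step t = expinv [:1:] t / (expinv [:1:] t + expinv [:1:] (1 - t))"

lemma smooth_step_denominator_pos: "expinv [:1:] t + expinv [:1:] (1 - t) > 0"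
  using expinv_1_pos[of t] expinv_1_nonneg[of t] expinv_1_pos[of "1 - t"] expinv_1_nonneg[of "1 - t"]
  by (cases "t > 0") auto

lemma smooth_smooth_step: "smooth smooth_step"
proof -
  have expinv: "n_times_differentiable n (expinv [:1:])" for n
    using smooth_expinv smooth_def by blast
  have "n_times_differentiable n (\<lambda>t. expinv [:1:] t * inverse (expinv [:1:] t + expinv [:1:] (- 1 * t + 1)))"
    for n
    using smooth_step_denominator_pos
    by (intro n_times_differentiable_mult n_times_differentiable_inverse n_times_differentiable_add
        n_times_differentiable_affine expinv) (simp add: less_imp_neq[THEN not_sym])
  then show ?thesis
    by (simp add: smooth_def smooth_step_def[abs_def] divide_inverse)
qed

lemma smooth_step_eq_0: "t \<le> 0 \<Longrightarrow> smooth_step t = 0"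
  by (simp add: smooth_step_def expinv_def)

lemma smooth_step_eq_1: "t \<ge> 1 \<Longrightarrow> smooth_step t = 1"
  using expinv_1_pos[of t] by (simp add: smooth_step_def expinv_def)

lemma smooth_step_nonneg: "smooth_step t \<ge> 0"
  using smooth_step_denominator_pos[of t] expinv_1_nonneg[of t] by (simp add: smooth_step_def)

lemma smooth_step_le_1: "smooth_step t \<le> 1"
  using smooth_step_denominator_pos[of t] expinv_1_nonneg[of "1 - t"]
  by (simp add: smooth_step_def divide_le_eq_1)

definition mollifier :: "real \<Rightarrow> real" where
  "mollifier = deriv smooth_step"

lemma smooth_step_has_derivative: "(smooth_step has_real_derivative mollifier t) (at t)"
  using smooth_deriv_funpow_differentiable[OF smooth_smooth_step, of 0]
  unfolding mollifier_def by (simp add: DERIV_deriv_iff_real_differentiable)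

lemma continuous_on_smooth_step: "continuous_on S smooth_step"
  using smooth_step_has_derivative by (meson DERIV_isCont continuous_at_imp_continuous_on)

lemma continuous_on_mollifier: "continuous_on S mollifier"
  using smooth_deriv_funpow_differentiable[OF smooth_smooth_step, of 1]
  by (intro continuous_at_imp_continuous_on)
     (auto simp: mollifier_def differentiable_imp_continuous_within)

lemma mollifier_eq_0: "t < 0 \<or> t > 1 \<Longrightarrow> mollifier t = 0"
proof -
  assume t: "t < 0 \<or> t > 1"
  have "(smooth_step has_real_derivative 0) (at t)"
  proof (cases "t < 0")
    case True
    have "((\<lambda>s. 0) has_real_derivative 0) (at t)" by simp
    then show ?thesis
      by (rule has_field_derivative_transform_within_open[of _ _ _ "{..<0}"])
         (use True smooth_step_eq_0 in auto)
  next
    case False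
    have "((\<lambda>s. 1) has_real_derivative 0) (at t)" by simp
    then show ?thesis
      by (rule has_field_derivative_transform_within_open[of _ _ _ "{1<..}"])
         (use False t smooth_step_eq_1 in auto)
  qed
  then show ?thesis using smooth_step_has_derivative DERIV_unique by blast
qed

lemma mollifier_bounded: "\<exists>M>0. \<forall>t. \<bar>mollifier t\<bar> \<le> M"
proof -
  have "bounded (mollifier ` {0..1})"
    by (intro compact_imp_bounded compact_continuous_image continuous_on_mollifier) simp
  then obtain M where M: "M > 0" "\<And>x. x \<in> mollifier ` {0..1} \<Longrightarrow> norm x \<le> M"
    unfolding bounded_pos by auto
  have "\<bar>mollifier t\<bar> \<le> M" for t
    using M mollifier_eq_0[of t] by (cases "t \<in> {0..1}") auto
  with M show ?thesis by auto
qed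

definition mollifier_bound :: real where
  "mollifier_bound = (SOME M. M > 0 \<and> (\<forall>t. \<bar>mollifier t\<bar> \<le> M))"

lemma mollifier_bound_pos: "mollifier_bound > 0"
  and abs_mollifier_le: "\<bar>mollifier t\<bar> \<le> mollifier_bound"
  using someI_ex[OF mollifier_bounded] unfolding mollifier_bound_def by auto

lemma smooth_step_measurable[measurable]: "smooth_step \<in> borel_measurable borel"
  using continuous_on_smooth_step by (rule borel_measurable_continuous_onI)

lemma mollifier_measurable[measurable]: "mollifier \<in> borel_measurable borel"
  using continuous_on_mollifier by (rule borel_measurable_continuous_onI)

lemma smooth_smooth_step_rescaled: "smooth (\<lambda>s. smooth_step ((s - y) / e))"
  using smooth_affine[OF smooth_smooth_step, of "1 / e" "- y / e"] by (simp add: diff_divide_distrib)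

definition eps_seq :: "nat \<Rightarrow> real" where
  "eps_seq n = 1 / real (Suc n)"

lemma eps_seq_pos: "eps_seq n > 0"
  and eps_seq_le_1: "eps_seq n \<le> 1"
  by (auto simp: eps_seq_def)

lemma smooth_step_rescaled_tendsto:
  "(\<lambda>n. smooth_step ((s - y) / eps_seq n)) \<longlonglongrightarrow> indicator {y<..} s"
proof (cases "s > y")
  case True
  obtain N :: nat where N: "1 / (s - y) < real N" using reals_Archimedean2 by blast
  have "eventually (\<lambda>n. smooth_step ((s - y) / eps_seq n) = 1) sequentially"
    unfolding eventually_sequentially
  proof (intro exI allI impI)
    fix n assume "N \<le> n"
    then have "1 / (s - y) < real (Suc n)" using N by linarith
    then have "1 \<le> (s - y) * real (Suc n)" using True by (simp add: field_simps)
    then show "smooth_step ((s - y) / eps_seq n) = 1" using smooth_step_eq_1 by (simp add: eps_seq_def)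
  qed
  then show ?thesis using True by (simp add: tendsto_eventually)
next
  case False
  then have "smooth_step ((s - y) / eps_seq n) = 0" for n
    using eps_seq_pos[of n] by (intro smooth_step_eq_0) (simp add: divide_nonpos_pos)
  then show ?thesis using False by simp
qed

text \<open>For \<open>y \<le> x\<close> and small \<open>e, d\<close>, \<open>window e y d x\<close> is a smoothed indicator of \<open>(y, x]\<close>.\<close>
definition window :: "real \<Rightarrow> real \<Rightarrow> real \<Rightarrow> real \<Rightarrow> real \<Rightarrow> real" where
  "window e y d x s = smooth_step ((s - y) / e) - smooth_step ((s - x) / d)"

lemma window_measurable[measurable]: "window e y d x \<in> borel_measurable lborel"
  unfolding window_def[abs_def] by measurable

lemma abs_window_le_1: "\<bar>window e y d x s\<bar> \<le> 1"
  using smooth_step_nonneg smooth_step_le_1 unfolding window_def abs_le_iff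
  by (smt (verit, best))

lemma window_eq_0:
  assumes "e > 0" "d > 0" and "s \<notin> {min y x .. max (y + e) (x + d)}"
  shows "window e y d x s = 0"
proof -
  have "(s - y) / e \<le> 0 \<and> (s - x) / d \<le> 0 \<or> (s - y) / e \<ge> 1 \<and> (s - x) / d \<ge> 1"
    using assms by (auto simp: field_simps min_def max_def split: if_splits)
  then show ?thesis
    using smooth_step_eq_0 smooth_step_eq_1 by (auto simp: window_def)
qed

lemma abs_window_le_indicator:
  "e > 0 \<Longrightarrow> d > 0 \<Longrightarrow> \<bar>window e y d x s\<bar> \<le> indicator {min y x .. max (y + e) (x + d)} s"
  using abs_window_le_1[of e y d x s] window_eq_0[of e d s y x]
  by (cases "s \<in> {min y x .. max (y + e) (x + d)}") auto

lemma abs_window_1_le_indicator: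
  assumes "0 < e" "e \<le> 1"
  shows "\<bar>window e y 1 y s\<bar> \<le> indicator {y..y + 1} s"
proof -
  have "window e y 1 y s = 0" if "s > y + 1"
  proof -
    have "(s - y) / e \<ge> (s - y) / 1" using that assms by (intro divide_left_mono) auto
    then show ?thesis using that smooth_step_eq_1 by (simp add: window_def)
  qed
  moreover have "window e y 1 y s = 0" if "s < y"
    using that assms by (intro window_eq_0) auto
  ultimately show ?thesis
    using abs_window_le_1[of e y 1 y s] by (cases "s \<in> {y..y + 1}") auto
qed

lemma test_fun_window:
  assumes "e > 0" "d > 0"
  shows "test_fun (window e y d x)"
proof (rule smooth_imp_test_fun)
  show "smooth (window e y d x)"
    by (auto simp: window_def[abs_def] intro!: smooth_diff smooth_smooth_step_rescaled)
  show "{s. window e y d x s \<noteq> 0} \<subseteq> {min y x .. max (y + e) (x + d)}"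
    using window_eq_0[OF assms] by blast
qed

lemma deriv_window:
  assumes "e > 0" "d > 0"
  shows "deriv (window e y d x) s = mollifier ((s - y) / e) / e - mollifier ((s - x) / d) / d"
proof -
  have "(window e y d x has_real_derivative
          (mollifier ((s - y) / e) / e - mollifier ((s - x) / d) / d)) (at s)"
    unfolding window_def using assms
    by (auto intro!: derivative_eq_intros DERIV_chain2[OF smooth_step_has_derivative] simp: field_simps)
  then show ?thesis by (rule DERIV_imp_deriv)
qed

lemma window_tendsto:
  "(\<lambda>n. window (eps_seq n) y (eps_seq n) x s) \<longlonglongrightarrow> indicator {y<..} s - indicator {x<..} s"
  unfolding window_def by (intro tendsto_diff smooth_step_rescaled_tendsto)

definition smooth_step_primitive :: "real \<Rightarrow> real" where
  "smooth_step_primitive t = integral {-1..t} smooth_step"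

lemma smooth_step_primitive_eq_0: "t \<le> 0 \<Longrightarrow> smooth_step_primitive t = 0"
proof -
  assume "t \<le> 0"
  then have "integral {-1..t} smooth_step = integral {-1..t} (\<lambda>_. 0::real)"
    using smooth_step_eq_0 by (intro integral_cong) auto
  then show ?thesis by (simp add: smooth_step_primitive_def)
qed

lemma smooth_step_primitive_has_derivative:
  "(smooth_step_primitive has_real_derivative smooth_step t) (at t)"
proof (cases "t < 0")
  case True
  have "((\<lambda>s. 0) has_real_derivative smooth_step t) (at t)" using True smooth_step_eq_0 by simp
  then show ?thesis
    by (rule has_field_derivative_transform_within_open[of _ _ _ "{..<0}"])
       (use True smooth_step_primitive_eq_0 in auto)
next
  case False
  have "((\<lambda>u. integral {-1..u} smooth_step) has_vector_derivative smooth_step t) (at t within {-1..t+1})"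
    by (rule integral_has_vector_derivative[OF continuous_on_smooth_step]) (use False in auto)
  moreover have "at t within {-1..t+1} = at t" by (rule at_within_Icc_at) (use False in auto)
  ultimately show ?thesis
    by (simp add: has_real_derivative_iff_has_vector_derivative smooth_step_primitive_def[abs_def])
qed

lemma smooth_step_primitive_measurable[measurable]: "smooth_step_primitive \<in> borel_measurable borel"
proof -
  have "continuous_on UNIV smooth_step_primitive"
    using smooth_step_primitive_has_derivative
    by (meson DERIV_isCont continuous_at_imp_continuous_on)
  then show ?thesis by (rule borel_measurable_continuous_onI)
qed

lemma smooth_smooth_step_primitive: "smooth smooth_step_primitive"
proof -
  have "n_times_differentiable n smooth_step_primitive" for n
    using smooth_step_primitive_has_derivative smooth_smooth_step
    by (cases n) (auto simp: smooth_def)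
  then show ?thesis by (simp add: smooth_def)
qed

lemma smooth_step_primitive_diff:
  "s \<ge> 0 \<Longrightarrow> smooth_step_primitive s - smooth_step_primitive (s - 1) = integral {s-1..s} smooth_step"
proof -
  assume "s \<ge> 0"
  then have "integral {-1..s-1} smooth_step + integral {s-1..s} smooth_step = integral {-1..s} smooth_step"
    by (intro Henstock_Kurzweil_Integration.integral_combine integrable_continuous_real
        continuous_on_smooth_step) auto
  then show ?thesis by (simp add: smooth_step_primitive_def)
qed

lemma abs_smooth_step_primitive_diff_le_1:
  "\<bar>smooth_step_primitive s - smooth_step_primitive (s - 1)\<bar> \<le> 1"
proof (cases "s \<ge> 0")
  case True
  have int: "smooth_step integrable_on {s-1..s}"
    by (intro integrable_continuous_real continuous_on_smooth_step)
  have "integral {s-1..s} smooth_step \<ge> 0"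
    by (rule integral_nonneg[OF int]) (use smooth_step_nonneg in auto)
  moreover have "integral {s-1..s} smooth_step \<le> integral {s-1..s} (\<lambda>_. 1::real)"
    by (rule integral_le[OF int]) (use smooth_step_le_1 in auto)
  ultimately show ?thesis using smooth_step_primitive_diff[OF True] by simp
next
  case False
  then show ?thesis using smooth_step_primitive_eq_0 by simp
qed

lemma smooth_step_primitive_diff_eq_1:
  "s \<ge> 2 \<Longrightarrow> smooth_step_primitive s - smooth_step_primitive (s - 1) = 1"
proof -
  assume s: "s \<ge> 2"
  then have "integral {s-1..s} smooth_step = integral {s-1..s} (\<lambda>_. 1::real)"
    using smooth_step_eq_1 by (intro integral_cong) auto
  then show ?thesis using smooth_step_primitive_diff[of s] s by simp
qed

text \<open>The function \<open>smooth_step (s / e)\<close> does not have compact support. Subtracting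
  \<open>smooth_step_primitive s - smooth_step_primitive (s - 1)\<close>, which equals 1 for \<open>s \<ge> 2\<close> and whose
  derivative \<open>window 1 0 1 1\<close> does not depend on \<open>e\<close>, turns it into a test function.\<close>
definition anchor :: "real \<Rightarrow> real \<Rightarrow> real" where
  "anchor e s = smooth_step (s / e) - (smooth_step_primitive s - smooth_step_primitive (s - 1))"

lemma anchor_measurable[measurable]: "anchor e \<in> borel_measurable lborel"
  unfolding anchor_def[abs_def] by measurable

lemma abs_anchor_le_indicator:
  assumes "0 < e" "e \<le> 1"
  shows "\<bar>anchor e s\<bar> \<le> 2 * indicator {0..2} s"
proof (cases "s \<in> {0..2}")
  case True
  then show ?thesis
    using abs_smooth_step_primitive_diff_le_1[of s] smooth_step_nonneg[of "s / e"]
      smooth_step_le_1[of "s / e"]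
    by (simp add: anchor_def)
next
  case False
  then consider "s < 0" | "s > 2" by auto
  then have "anchor e s = 0"
  proof cases
    case 1
    then show ?thesis
      using smooth_step_eq_0[of "s / e"] smooth_step_primitive_eq_0[of s]
        smooth_step_primitive_eq_0[of "s - 1"] assms
      by (simp add: anchor_def divide_nonpos_pos)
  next
    case 2
    have "s / e \<ge> s / 1" using 2 assms by (intro divide_left_mono) auto
    then show ?thesis
      using smooth_step_eq_1[of "s / e"] smooth_step_primitive_diff_eq_1[of s] 2
      by (simp add: anchor_def)
  qed
  then show ?thesis by simp
qed

lemma test_fun_anchor:
  assumes "0 < e" "e \<le> 1"
  shows "test_fun (anchor e)"
proof (rule smooth_imp_test_fun)
  show "smooth (anchor e)"
    using smooth_affine[OF smooth_smooth_step_primitive, of 1 "- 1"]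
      smooth_smooth_step_rescaled[of 0 e]
    by (auto simp: anchor_def[abs_def] intro!: smooth_diff smooth_smooth_step_primitive)
  show "{s. anchor e s \<noteq> 0} \<subseteq> {0..2}"
  proof
    fix s assume "s \<in> {s. anchor e s \<noteq> 0}"
    then show "s \<in> {0..2}"
      using abs_anchor_le_indicator[OF assms, of s] by (cases "s \<in> {0..2}") auto
  qed
qed

lemma deriv_anchor:
  assumes "0 < e"
  shows "deriv (anchor e) s = mollifier (s / e) / e - window 1 0 1 1 s"
proof -
  have "(anchor e has_real_derivative
          (mollifier (s / e) / e - (smooth_step s - smooth_step (s - 1)))) (at s)"
    unfolding anchor_def[abs_def] using assms
    by (auto intro!: derivative_eq_intros DERIV_chain2[OF smooth_step_has_derivative]
        DERIV_chain2[OF smooth_step_primitive_has_derivative])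
  then show ?thesis by (simp add: DERIV_imp_deriv window_def)
qed

lemma anchor_tendsto:
  "(\<lambda>n. anchor (eps_seq n) s) \<longlonglongrightarrow>
     indicator {0<..} s - (smooth_step_primitive s - smooth_step_primitive (s - 1))"
  unfolding anchor_def using smooth_step_rescaled_tendsto[of s 0]
  by (intro tendsto_diff tendsto_const) simp

lemma emeasure_density_greaterThan:
  fixes h :: "real \<Rightarrow> real"
  assumes h: "integrable lborel h" "\<And>s. h s \<ge> 0"
  shows "emeasure (density lborel h) {x<..} = ennreal (\<integral>s. h s * indicator {x<..} s \<partial>lborel)"
proof -
  have [measurable]: "h \<in> borel_measurable lborel" using h by auto
  have "emeasure (density lborel h) {x<..} = (\<integral>\<^sup>+ s. ennreal (h s) * indicator {x<..} s \<partial>lborel)"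
    by (rule emeasure_density) (auto simp: borel_open)
  also have "\<dots> = (\<integral>\<^sup>+ s. ennreal (h s * indicator {x<..} s) \<partial>lborel)"
    by (rule nn_integral_cong) (auto split: split_indicator)
  also have "\<dots> = ennreal (\<integral>s. h s * indicator {x<..} s \<partial>lborel)"
    using h by (intro nn_integral_eq_integral integrable_real_mult_indicator) (auto simp: borel_open)
  finally show ?thesis .
qed

text \<open>The positive and negative parts of \<open>g\<close> define measures agreeing on all rays
  \<open>(x, \<infinity>)\<close>; hence they agree, and so do their densities.\<close>
lemma AE_eq_0_if_tail_integrals_eq_0:
  fixes g :: "real \<Rightarrow> real"
  assumes g: "integrable lborel g"
    and tails: "\<And>x. (\<integral>s. g s * indicator {x<..} s \<partial>lborel) = 0"
  shows "AE s in lborel. g s = 0"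
proof -
  define gp where "gp s = max (g s) 0" for s
  define gm where "gm s = max (- g s) 0" for s
  have gpi: "integrable lborel gp" and gmi: "integrable lborel gm"
    unfolding gp_def gm_def using g by auto
  have g_eq: "g s = gp s - gm s" for s
    by (simp add: gp_def gm_def max_def)
  have tails_eq: "(\<integral>s. gp s * indicator {x<..} s \<partial>lborel) = (\<integral>s. gm s * indicator {x<..} s \<partial>lborel)"
    for x
  proof -
    have "(\<integral>s. g s * indicator {x<..} s \<partial>lborel) =
          (\<integral>s. gp s * indicator {x<..} s - gm s * indicator {x<..} s \<partial>lborel)"
      by (simp add: g_eq algebra_simps)
    also have "\<dots> = (\<integral>s. gp s * indicator {x<..} s \<partial>lborel) - (\<integral>s. gm s * indicator {x<..} s \<partial>lborel)"
      using gpi gmi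
      by (intro Bochner_Integration.integral_diff integrable_real_mult_indicator) (auto simp: borel_open)
    finally show ?thesis using tails[of x] by simp
  qed
  have "density lborel gp = density lborel gm"
  proof (rule measure_eqI_lessThan)
    fix x
    show "emeasure (density lborel gp) {x<..} < \<infinity>"
      using emeasure_density_greaterThan[OF gpi] by (simp add: gp_def)
    show "emeasure (density lborel gp) {x<..} = emeasure (density lborel gm) {x<..}"
      using emeasure_density_greaterThan[OF gpi] emeasure_density_greaterThan[OF gmi] tails_eq
      by (simp add: gp_def gm_def)
  qed simp_all
  then have "AE s in lborel. ennreal (gp s) = ennreal (gm s)"
    using gpi gmi
    by (subst (asm) sigma_finite_measure.density_unique_iff[OF lborel.sigma_finite_measure_axioms]) auto
  then show ?thesis
    by eventually_elim (simp add: gp_def gm_def max_def split: if_splits)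
qed

lemma AE_eq_0_if_interval_integrals_eq_0:
  fixes f :: "real \<Rightarrow> real"
  assumes int: "\<And>a b. integrable lborel (\<lambda>s. f s * indicator {a..b} s)"
    and zero: "\<And>a b. a \<le> b \<Longrightarrow> (\<integral>s. f s * indicator {a..b} s \<partial>lborel) = 0"
  shows "AE s in lborel. f s = 0"
proof -
  have "AE s in lborel. f s * indicator {-K..K} s = 0" for K :: real
  proof (rule AE_eq_0_if_tail_integrals_eq_0[OF int])
    fix x :: real
    define c where "c = max x (- K)"
    have "(\<integral>s. f s * indicator {-K..K} s * indicator {x<..} s \<partial>lborel) =
          (\<integral>s. f s * indicator {c..K} s \<partial>lborel)"
    proof (rule integral_cong_AE)
      show "AE s in lborel. f s * indicator {-K..K} s * indicator {x<..} s = f s * indicator {c..K} s"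
        using AE_lborel_singleton[of c] by eventually_elim (auto simp: c_def split: split_indicator)
    qed (use int[of "- K" K] int[of c K] in \<open>auto simp: borel_open\<close>)
    also have "\<dots> = 0"
      by (cases "c \<le> K") (auto simp: zero)
    finally show "(\<integral>s. f s * indicator {-K..K} s * indicator {x<..} s \<partial>lborel) = 0" .
  qed
  then have "AE s in lborel. \<forall>K::nat. f s * indicator {- real K..real K} s = 0"
    by (subst AE_all_countable) auto
  then show ?thesis
  proof eventually_elim
    case (elim s)
    obtain K :: nat where "\<bar>s\<bar> \<le> real K" using real_arch_simple by blast
    then have "s \<in> {- real K..real K}" by auto
    then show ?case using elim[rule_format, of K] by simp
  qed
qed

section \<open>Mollification and the embedding of \<open>H\<^sup>1(\<real>)\<close> into \<open>L\<^sup>\<infinity>(\<real>)\<close>\<close>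

lemma L2_measurable: "L2 f \<Longrightarrow> f \<in> borel_measurable lborel"
  and L2_integrable_sq: "L2 f \<Longrightarrow> integrable lborel (\<lambda>x. (f x)\<^sup>2)"
  by (simp_all add: L2_def)

lemma integrable_indicator_Icc: "integrable lborel (indicator {a..b} :: real \<Rightarrow> real)"
  by (simp add: integrable_indicator_iff emeasure_lborel_Icc_eq)

lemma integrable_L2_mult_compact_support:
  assumes f: "L2 f" and g: "g \<in> borel_measurable lborel"
    and M: "M \<ge> 0" "\<And>s. \<bar>g s\<bar> \<le> M * indicator {a..b} s"
  shows "integrable lborel (\<lambda>s. f s * g s)"
proof (rule Bochner_Integration.integrable_bound)
  show "integrable lborel (\<lambda>s. M * (f s)\<^sup>2 + M * indicator {a..b} s)"
    using f by (intro Bochner_Integration.integrable_add Bochner_Integration.integrable_mult_right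
        L2_integrable_sq integrable_indicator_Icc)
  show "(\<lambda>s. f s * g s) \<in> borel_measurable lborel"
    using f g L2_measurable by measurable
  show "AE x in lborel. norm (f x * g x) \<le> norm (M * (f x)\<^sup>2 + M * indicator {a..b} x)"
  proof (rule AE_I2)
    fix x
    have "\<bar>f x\<bar> \<le> (f x)\<^sup>2 + 1"
      using sum_squares_bound[of "\<bar>f x\<bar>" 1] by (simp add: power2_eq_square)
    then have "\<bar>f x\<bar> * M \<le> ((f x)\<^sup>2 + 1) * M" using M(1) by (rule mult_right_mono)
    then have "\<bar>f x\<bar> * (M * indicator {a..b} x) \<le> M * (f x)\<^sup>2 + M * indicator {a..b} x"
      using M(1) by (auto simp: algebra_simps split: split_indicator)
    moreover have "\<bar>f x * g x\<bar> \<le> \<bar>f x\<bar> * (M * indicator {a..b} x)"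
      using M(2)[of x] by (simp add: abs_mult mult_left_mono)
    ultimately show "norm (f x * g x) \<le> norm (M * (f x)\<^sup>2 + M * indicator {a..b} x)" by simp
  qed
qed

lemma integrable_L2_mult: "L2 f \<Longrightarrow> L2 g \<Longrightarrow> integrable lborel (\<lambda>s. f s * g s)"
proof (rule Bochner_Integration.integrable_bound)
  assume f: "L2 f" and g: "L2 g"
  show "integrable lborel (\<lambda>s. (f s)\<^sup>2 + (g s)\<^sup>2)"
    using f g by (intro Bochner_Integration.integrable_add L2_integrable_sq)
  show "(\<lambda>s. f s * g s) \<in> borel_measurable lborel"
    using f g L2_measurable by measurable
  show "AE x in lborel. norm (f x * g x) \<le> norm ((f x)\<^sup>2 + (g x)\<^sup>2)"
  proof (rule AE_I2)
    fix x
    have "2 * \<bar>f x * g x\<bar> \<le> (f x)\<^sup>2 + (g x)\<^sup>2"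
      using sum_squares_bound[of "\<bar>f x\<bar>" "\<bar>g x\<bar>"] by (simp add: abs_mult power2_eq_square)
    then show "norm (f x * g x) \<le> norm ((f x)\<^sup>2 + (g x)\<^sup>2)" by simp
  qed
qed

lemma integrable_abs_L2_mult_indicator:
  "L2 f \<Longrightarrow> integrable lborel (\<lambda>s. \<bar>f s\<bar> * indicator {a..b} s)"
  using integrable_abs[OF integrable_L2_mult_compact_support[of f "indicator {a..b}" 1 a b]]
  by (simp add: abs_mult)

lemma integral_abs_L2_mult_indicator_le:
  assumes f: "L2 f" and t: "t > 0" and ab: "a \<le> b"
  shows "(\<integral>s. \<bar>f s\<bar> * indicator {a..b} s \<partial>lborel) \<le> ((b - a) * t + (\<integral>s. (f s)\<^sup>2 \<partial>lborel) / t) / 2"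
proof -
  have "(\<integral>s. \<bar>f s\<bar> * indicator {a..b} s \<partial>lborel) \<le>
        (\<integral>s. (t * indicator {a..b} s + (f s)\<^sup>2 / t) / 2 \<partial>lborel)"
  proof (rule integral_mono)
    show "integrable lborel (\<lambda>s. (t * indicator {a..b} s + (f s)\<^sup>2 / t) / 2)"
      using f by (intro Bochner_Integration.integrable_divide Bochner_Integration.integrable_add
          Bochner_Integration.integrable_mult_right integrable_indicator_Icc L2_integrable_sq)
    fix s
    have "2 * t * \<bar>f s\<bar> \<le> t * t + (f s)\<^sup>2"
      using sum_squares_bound[of t "\<bar>f s\<bar>"] by (simp add: power2_eq_square algebra_simps)
    then have "\<bar>f s\<bar> \<le> (t + (f s)\<^sup>2 / t) / 2" using t by (simp add: field_simps)
    then show "\<bar>f s\<bar> * indicator {a..b} s \<le> (t * indicator {a..b} s + (f s)\<^sup>2 / t) / 2"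
      using t by (simp split: split_indicator)
  qed (use integrable_abs_L2_mult_indicator[OF f] in simp)
  also have "\<dots> = ((b - a) * t + (\<integral>s. (f s)\<^sup>2 \<partial>lborel) / t) / 2"
    using f ab by (simp add: L2_integrable_sq integrable_indicator_Icc algebra_simps)
  finally show ?thesis .
qed

definition mollify :: "(real \<Rightarrow> real) \<Rightarrow> real \<Rightarrow> real \<Rightarrow> real" where
  "mollify u e y = (\<integral>s. u s * (mollifier ((s - y) / e) / e) \<partial>lborel)"

lemma abs_mollifier_rescaled_le:
  assumes "e > 0"
  shows "\<bar>mollifier ((s - y) / e) / e\<bar> \<le> (mollifier_bound / e) * indicator {y..y + e} s"
proof (cases "s \<in> {y..y + e}")
  case True
  then show ?thesis
    using abs_mollifier_le[of "(s - y) / e"] assms by (simp add: divide_right_mono)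
next
  case False
  then have "(s - y) / e < 0 \<or> (s - y) / e > 1" using assms by (auto simp: field_simps)
  then show ?thesis using mollifier_eq_0 False by simp
qed

lemma integrable_mollify_kernel:
  "L2 u \<Longrightarrow> e > 0 \<Longrightarrow> integrable lborel (\<lambda>s. u s * (mollifier ((s - y) / e) / e))"
  using abs_mollifier_rescaled_le mollifier_bound_pos
  by (intro integrable_L2_mult_compact_support[of u _ "mollifier_bound / e" y "y + e"]) auto

lemma integrable_L2_mult_window:
  "L2 f \<Longrightarrow> e > 0 \<Longrightarrow> d > 0 \<Longrightarrow> integrable lborel (\<lambda>s. f s * window e y d x s)"
  using abs_window_le_indicator
  by (intro integrable_L2_mult_compact_support[of f _ 1 "min y x" "max (y + e) (x + d)"]) auto

lemma mollify_measurable[measurable]: "L2 u \<Longrightarrow> mollify u e \<in> borel_measurable lborel"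
proof -
  assume "L2 u"
  then have [measurable]: "u \<in> borel_measurable lborel" by (rule L2_measurable)
  have "(\<lambda>(y, s). u s * (mollifier ((s - y) / e) / e)) \<in> borel_measurable (lborel \<Otimes>\<^sub>M lborel)"
    by measurable
  then show ?thesis
    unfolding mollify_def[abs_def]
    by (rule lborel.borel_measurable_lebesgue_integral)
qed

lemma mollify_diff_eq:
  assumes u: "L2 u" and wd: "weak_deriv_of u1 u" and e: "e > 0" and d: "d > 0"
  shows "mollify u e y - mollify u d x = - (\<integral>s. u1 s * window e y d x s \<partial>lborel)"
proof -
  have "- (\<integral>s. u1 s * window e y d x s \<partial>lborel) = (\<integral>s. u s * deriv (window e y d x) s \<partial>lborel)"
    using wd test_fun_window[OF e d] unfolding weak_deriv_of_def by simp
  also have "\<dots> = (\<integral>s. u s * (mollifier ((s - y) / e) / e) - u s * (mollifier ((s - x) / d) / d) \<partial>lborel)"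
    by (simp only: deriv_window[OF e d] right_diff_distrib)
  also have "\<dots> = mollify u e y - mollify u d x"
    unfolding mollify_def using integrable_mollify_kernel[OF u e] integrable_mollify_kernel[OF u d]
    by (rule Bochner_Integration.integral_diff)
  finally show ?thesis by simp
qed

text \<open>Comparing with the mollification at scale 1 gives a bound uniform in the scale.\<close>
lemma abs_mollify_le:
  assumes u: "L2 u" and u1: "L2 u1" and wd: "weak_deriv_of u1 u"
    and e: "0 < e" "e \<le> 1" and t: "t > 0"
  shows "\<bar>mollify u e y\<bar> \<le> mollifier_bound * ((t + (\<integral>s. (u s)\<^sup>2 \<partial>lborel) / t) / 2)
                             + (t + (\<integral>s. (u1 s)\<^sup>2 \<partial>lborel) / t) / 2"
proof -
  have "\<bar>mollify u 1 y\<bar> \<le> (\<integral>s. mollifier_bound * (\<bar>u s\<bar> * indicator {y..y + 1} s) \<partial>lborel)"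
    unfolding mollify_def
  proof (rule integral_abs_bound_integral)
    show "integrable lborel (\<lambda>s. u s * (mollifier ((s - y) / 1) / 1))"
      using integrable_mollify_kernel[OF u, of 1] by simp
    show "integrable lborel (\<lambda>s. mollifier_bound * (\<bar>u s\<bar> * indicator {y..y + 1} s))"
      using integrable_abs_L2_mult_indicator[OF u] by simp
    fix s
    show "\<bar>u s * (mollifier ((s - y) / 1) / 1)\<bar> \<le> mollifier_bound * (\<bar>u s\<bar> * indicator {y..y + 1} s)"
      using mult_left_mono[OF abs_mollifier_rescaled_le[of 1 s y], of "\<bar>u s\<bar>"]
      by (simp add: abs_mult algebra_simps)
  qed
  also have "\<dots> \<le> mollifier_bound * ((t + (\<integral>s. (u s)\<^sup>2 \<partial>lborel) / t) / 2)"
    using integral_abs_L2_mult_indicator_le[OF u t, of y "y + 1"] mollifier_bound_pos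
    by (simp add: mult_left_mono)
  finally have scale_1: "\<bar>mollify u 1 y\<bar> \<le> mollifier_bound * ((t + (\<integral>s. (u s)\<^sup>2 \<partial>lborel) / t) / 2)" .
  have "\<bar>\<integral>s. u1 s * window e y 1 y s \<partial>lborel\<bar> \<le> (\<integral>s. \<bar>u1 s\<bar> * indicator {y..y + 1} s \<partial>lborel)"
  proof (rule integral_abs_bound_integral)
    show "integrable lborel (\<lambda>s. u1 s * window e y 1 y s)"
      using integrable_L2_mult_window[OF u1 e(1)] by simp
    show "integrable lborel (\<lambda>s. \<bar>u1 s\<bar> * indicator {y..y + 1} s)"
      using integrable_abs_L2_mult_indicator[OF u1] .
    fix s
    show "\<bar>u1 s * window e y 1 y s\<bar> \<le> \<bar>u1 s\<bar> * indicator {y..y + 1} s"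
      using abs_window_1_le_indicator[OF e, of y s] by (simp add: abs_mult mult_left_mono)
  qed
  also have "\<dots> \<le> (t + (\<integral>s. (u1 s)\<^sup>2 \<partial>lborel) / t) / 2"
    using integral_abs_L2_mult_indicator_le[OF u1 t, of y "y + 1"] by simp
  finally show ?thesis
    using scale_1 mollify_diff_eq[OF u wd e(1), of 1 y y] by linarith
qed

lemma integral_L2_mult_window_tendsto:
  assumes f: "L2 f"
  shows "(\<lambda>n. \<integral>s. f s * window (eps_seq n) y (eps_seq n) x s \<partial>lborel) \<longlonglongrightarrow>
           (\<integral>s. f s * (indicator {y<..} s - indicator {x<..} s) \<partial>lborel)"
proof (rule integral_dominated_convergence)
  have [measurable]: "f \<in> borel_measurable lborel" using f by (rule L2_measurable)
  show "(\<lambda>s. f s * (indicator {y<..} s - indicator {x<..} s)) \<in> borel_measurable lborel"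
    and "(\<lambda>s. f s * window (eps_seq n) y (eps_seq n) x s) \<in> borel_measurable lborel" for n
    by measurable
  show "integrable lborel (\<lambda>s. \<bar>f s\<bar> * indicator {min y x .. max y x + 1} s)"
    using integrable_abs_L2_mult_indicator[OF f] .
  show "AE s in lborel. (\<lambda>n. f s * window (eps_seq n) y (eps_seq n) x s) \<longlonglongrightarrow>
                        f s * (indicator {y<..} s - indicator {x<..} s)"
    by (intro AE_I2 tendsto_mult tendsto_const window_tendsto)
  fix n
  show "AE s in lborel. norm (f s * window (eps_seq n) y (eps_seq n) x s) \<le>
                        \<bar>f s\<bar> * indicator {min y x .. max y x + 1} s"
  proof (rule AE_I2)
    fix s
    have "\<bar>window (eps_seq n) y (eps_seq n) x s\<bar> \<le> indicator {min y x .. max y x + 1} s"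
      using abs_window_le_indicator[of "eps_seq n" "eps_seq n" y x s] eps_seq_pos[of n] eps_seq_le_1[of n]
      by (auto split: split_indicator split_indicator_asm)
    then show "norm (f s * window (eps_seq n) y (eps_seq n) x s) \<le>
               \<bar>f s\<bar> * indicator {min y x .. max y x + 1} s"
      by (simp add: abs_mult mult_left_mono)
  qed
qed

lemma mollify_diff_tendsto:
  assumes u: "L2 u" and u1: "L2 u1" and wd: "weak_deriv_of u1 u"
  shows "(\<lambda>n. mollify u (eps_seq n) y - mollify u (eps_seq n) x) \<longlonglongrightarrow>
           - (\<integral>s. u1 s * (indicator {y<..} s - indicator {x<..} s) \<partial>lborel)"
  unfolding mollify_diff_eq[OF u wd eps_seq_pos eps_seq_pos]
  by (rule tendsto_minus[OF integral_L2_mult_window_tendsto[OF u1]])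

lemma mollify_at_0_eq:
  assumes u: "L2 u" and wd: "weak_deriv_of u1 u" and e: "0 < e" "e \<le> 1"
  shows "mollify u e 0 = (\<integral>s. u s * window 1 0 1 1 s \<partial>lborel) - (\<integral>s. u1 s * anchor e s \<partial>lborel)"
proof -
  have "- (\<integral>s. u1 s * anchor e s \<partial>lborel) = (\<integral>s. u s * deriv (anchor e) s \<partial>lborel)"
    using wd test_fun_anchor[OF e] unfolding weak_deriv_of_def by simp
  also have "\<dots> = (\<integral>s. u s * (mollifier ((s - 0) / e) / e) - u s * window 1 0 1 1 s \<partial>lborel)"
    by (simp add: deriv_anchor[OF e(1)] right_diff_distrib)
  also have "\<dots> = mollify u e 0 - (\<integral>s. u s * window 1 0 1 1 s \<partial>lborel)"
    unfolding mollify_def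
    using integrable_mollify_kernel[OF u e(1), of 0] integrable_L2_mult_window[OF u, of 1 1 0 1]
    by (intro Bochner_Integration.integral_diff) auto
  finally show ?thesis by simp
qed

lemma convergent_mollify_at_0:
  assumes u: "L2 u" and u1: "L2 u1" and wd: "weak_deriv_of u1 u"
  shows "convergent (\<lambda>n. mollify u (eps_seq n) 0)"
proof -
  have [measurable]: "u1 \<in> borel_measurable lborel" using u1 by (rule L2_measurable)
  have "(\<lambda>n. \<integral>s. u1 s * anchor (eps_seq n) s \<partial>lborel) \<longlonglongrightarrow>
          (\<integral>s. u1 s * (indicator {0<..} s - (smooth_step_primitive s - smooth_step_primitive (s - 1))) \<partial>lborel)"
  proof (rule integral_dominated_convergence)
    show "integrable lborel (\<lambda>s. 2 * (\<bar>u1 s\<bar> * indicator {0..2} s))"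
      using integrable_abs_L2_mult_indicator[OF u1] by simp
    show "AE s in lborel. (\<lambda>n. u1 s * anchor (eps_seq n) s) \<longlonglongrightarrow>
            u1 s * (indicator {0<..} s - (smooth_step_primitive s - smooth_step_primitive (s - 1)))"
      by (intro AE_I2 tendsto_mult tendsto_const anchor_tendsto)
    fix n
    show "AE s in lborel. norm (u1 s * anchor (eps_seq n) s) \<le> 2 * (\<bar>u1 s\<bar> * indicator {0..2} s)"
      using abs_anchor_le_indicator[OF eps_seq_pos eps_seq_le_1]
      by (intro AE_I2) (simp add: abs_mult mult_left_mono mult.left_commute)
  qed measurable
  then have "convergent (\<lambda>n. (\<integral>s. u s * window 1 0 1 1 s \<partial>lborel) - (\<integral>s. u1 s * anchor (eps_seq n) s \<partial>lborel))"
    by (intro convergent_diff convergent_const) (auto simp: convergent_def)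
  then show ?thesis
    by (simp add: mollify_at_0_eq[OF u wd eps_seq_pos eps_seq_le_1])
qed

lemma convergent_mollify:
  assumes u: "L2 u" and u1: "L2 u1" and wd: "weak_deriv_of u1 u"
  shows "convergent (\<lambda>n. mollify u (eps_seq n) y)"
proof -
  have "convergent (\<lambda>n. mollify u (eps_seq n) 0 + (mollify u (eps_seq n) y - mollify u (eps_seq n) 0))"
    using convergent_mollify_at_0[OF assms] mollify_diff_tendsto[OF assms, of y 0]
    by (intro convergent_add) (auto simp: convergent_def)
  then show ?thesis by simp
qed

lemma integral_mollifier_rescaled_Icc:
  assumes e: "e > 0" and ab: "a \<le> b"
  shows "(\<integral>y. mollifier ((s - y) / e) / e * indicator {a..b} y \<partial>lborel) = window e a e b s"
proof -
  have "(\<integral>y. indicator {a..b} y *\<^sub>R (mollifier ((s - y) / e) / e) \<partial>lborel) =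
        (- smooth_step ((s - b) / e)) - (- smooth_step ((s - a) / e))"
  proof (rule integral_FTC_atLeastAtMost[OF ab])
    fix y
    have "((\<lambda>y. - smooth_step ((s - y) / e)) has_real_derivative (mollifier ((s - y) / e) / e)) (at y)"
      using e by (auto intro!: derivative_eq_intros DERIV_chain2[OF smooth_step_has_derivative])
    then show "((\<lambda>y. - smooth_step ((s - y) / e)) has_vector_derivative (mollifier ((s - y) / e) / e))
                 (at y within {a..b})"
      by (simp add: has_real_derivative_iff_has_vector_derivative has_vector_derivative_at_within)
  next
    show "continuous_on {a..b} (\<lambda>y. mollifier ((s - y) / e) / e)"
      by (intro continuous_intros continuous_on_compose2[OF continuous_on_mollifier[of UNIV]])
         (use e in auto)
  qed
  then show ?thesis by (simp add: window_def mult.commute)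
qed

lemma integral_abs_mollify_kernel_le:
  assumes u: "L2 u" and e: "e > 0"
  shows "(\<integral>s. \<bar>u s * (mollifier ((s - y) / e) / e)\<bar> \<partial>lborel) \<le>
         mollifier_bound / e * ((e + (\<integral>s. (u s)\<^sup>2 \<partial>lborel)) / 2)"
proof -
  have "(\<integral>s. \<bar>u s * (mollifier ((s - y) / e) / e)\<bar> \<partial>lborel) \<le>
        (\<integral>s. mollifier_bound / e * (\<bar>u s\<bar> * indicator {y..y + e} s) \<partial>lborel)"
  proof (rule integral_mono)
    show "integrable lborel (\<lambda>s. \<bar>u s * (mollifier ((s - y) / e) / e)\<bar>)"
      using integrable_mollify_kernel[OF u e] by (rule integrable_abs)
    show "integrable lborel (\<lambda>s. mollifier_bound / e * (\<bar>u s\<bar> * indicator {y..y + e} s))"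
      using integrable_abs_L2_mult_indicator[OF u] by simp
    fix s
    show "\<bar>u s * (mollifier ((s - y) / e) / e)\<bar> \<le> mollifier_bound / e * (\<bar>u s\<bar> * indicator {y..y + e} s)"
      using mult_left_mono[OF abs_mollifier_rescaled_le[OF e, of s y], of "\<bar>u s\<bar>"]
      by (simp add: abs_mult algebra_simps)
  qed
  also have "\<dots> = mollifier_bound / e * (\<integral>s. \<bar>u s\<bar> * indicator {y..y + e} s \<partial>lborel)"
    by simp
  also have "\<dots> \<le> mollifier_bound / e * ((e + (\<integral>s. (u s)\<^sup>2 \<partial>lborel)) / 2)"
    using integral_abs_L2_mult_indicator_le[OF u zero_less_one, of y "y + e"] mollifier_bound_pos e
    by (intro mult_left_mono) auto
  finally show ?thesis .
qed

lemma integral_mollify_Icc: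
  assumes u: "L2 u" and e: "e > 0" and ab: "a \<le> b"
  shows "(\<integral>y. mollify u e y * indicator {a..b} y \<partial>lborel) = (\<integral>s. u s * window e a e b s \<partial>lborel)"
proof -
  have [measurable]: "u \<in> borel_measurable lborel" using u by (rule L2_measurable)
  define f where "f y s = u s * (mollifier ((s - y) / e) / e) * indicator {a..b} y" for y s
  define c where "c = mollifier_bound / e * ((e + (\<integral>s. (u s)\<^sup>2 \<partial>lborel)) / 2)"
  have c: "c \<ge> 0"
    unfolding c_def using mollifier_bound_pos e by (auto intro!: integral_nonneg_AE)
  have "integrable (lborel \<Otimes>\<^sub>M lborel) (case_prod f)"
  proof (rule lborel_pair.Fubini_integrable)
    show "integrable lborel (\<lambda>y. \<integral>s. norm (case_prod f (y, s)) \<partial>lborel)"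
    proof (rule Bochner_Integration.integrable_bound)
      show "integrable lborel (\<lambda>y. c * indicator {a..b} y)"
        using integrable_indicator_Icc by simp
      show "AE y in lborel. norm (\<integral>s. norm (case_prod f (y, s)) \<partial>lborel) \<le> norm (c * indicator {a..b} y)"
      proof (rule AE_I2)
        fix y
        have "(\<integral>s. norm (case_prod f (y, s)) \<partial>lborel) =
              (\<integral>s. \<bar>u s * (mollifier ((s - y) / e) / e)\<bar> \<partial>lborel) * indicator {a..b} y"
          by (simp add: f_def abs_mult)
        moreover have "(\<integral>s. \<bar>u s * (mollifier ((s - y) / e) / e)\<bar> \<partial>lborel) \<ge> 0"
          by (rule integral_nonneg_AE) simp
        ultimately show "norm (\<integral>s. norm (case_prod f (y, s)) \<partial>lborel) \<le> norm (c * indicator {a..b} y)"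
          using integral_abs_mollify_kernel_le[OF u e, of y, folded c_def] c
          by (auto split: split_indicator)
      qed
    qed (simp add: f_def)
    show "AE y in lborel. integrable lborel (\<lambda>s. case_prod f (y, s))"
      using integrable_mult_left[OF integrable_mollify_kernel[OF u e]] by (simp add: f_def)
  qed (unfold f_def, measurable)
  then have "(\<integral>s. (\<integral>y. f y s \<partial>lborel) \<partial>lborel) = (\<integral>y. (\<integral>s. f y s \<partial>lborel) \<partial>lborel)"
    by (rule lborel_pair.Fubini_integral)
  moreover have "(\<integral>y. f y s \<partial>lborel) = u s * window e a e b s" for s
  proof -
    have "(\<integral>y. f y s \<partial>lborel) = u s * (\<integral>y. mollifier ((s - y) / e) / e * indicator {a..b} y \<partial>lborel)"
      unfolding f_def by (simp add: mult.assoc)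
    then show ?thesis by (simp only: integral_mollifier_rescaled_Icc[OF e ab])
  qed
  moreover have "(\<integral>s. f y s \<partial>lborel) = mollify u e y * indicator {a..b} y" for y
    unfolding f_def mollify_def by simp
  ultimately show ?thesis by simp
qed

definition mollify_limit :: "(real \<Rightarrow> real) \<Rightarrow> real \<Rightarrow> real" where
  "mollify_limit u y = lim (\<lambda>n. mollify u (eps_seq n) y)"

context
  fixes u u1 :: "real \<Rightarrow> real"
  assumes u: "L2 u" and u1: "L2 u1" and wd: "weak_deriv_of u1 u"
begin

lemma mollify_limit_tendsto: "(\<lambda>n. mollify u (eps_seq n) y) \<longlonglongrightarrow> mollify_limit u y"
  unfolding mollify_limit_def using convergent_mollify[OF u u1 wd] convergent_LIMSEQ_iff by blast

lemma mollify_limit_measurable[measurable]: "mollify_limit u \<in> borel_measurable lborel"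
  using mollify_limit_tendsto mollify_measurable[OF u] by (rule borel_measurable_LIMSEQ_real)

lemma abs_mollify_limit_le:
  assumes "t > 0"
  shows "\<bar>mollify_limit u y\<bar> \<le> mollifier_bound * ((t + (\<integral>s. (u s)\<^sup>2 \<partial>lborel) / t) / 2)
                                + (t + (\<integral>s. (u1 s)\<^sup>2 \<partial>lborel) / t) / 2"
  using abs_mollify_le[OF u u1 wd eps_seq_pos eps_seq_le_1 assms]
  by (intro LIMSEQ_le_const2[OF tendsto_rabs[OF mollify_limit_tendsto]]) blast

lemma integral_mollify_limit_Icc:
  assumes ab: "a \<le> b"
  shows "(\<integral>y. mollify_limit u y * indicator {a..b} y \<partial>lborel) =
         (\<integral>s. u s * (indicator {a<..} s - indicator {b<..} s) \<partial>lborel)"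
proof -
  have [measurable]: "u \<in> borel_measurable lborel" using u by (rule L2_measurable)
  define B where "B = mollifier_bound * ((1 + (\<integral>s. (u s)\<^sup>2 \<partial>lborel)) / 2)
                      + (1 + (\<integral>s. (u1 s)\<^sup>2 \<partial>lborel)) / 2"
  have "(\<lambda>n. \<integral>y. mollify u (eps_seq n) y * indicator {a..b} y \<partial>lborel) \<longlonglongrightarrow>
          (\<integral>y. mollify_limit u y * indicator {a..b} y \<partial>lborel)"
  proof (rule integral_dominated_convergence)
    show "integrable lborel (\<lambda>y. B * indicator {a..b} y)"
      using integrable_indicator_Icc by simp
    show "AE y in lborel. (\<lambda>n. mollify u (eps_seq n) y * indicator {a..b} y) \<longlonglongrightarrow>
                          mollify_limit u y * indicator {a..b} y"
      by (intro AE_I2 tendsto_mult tendsto_const mollify_limit_tendsto)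
    show "AE y in lborel. norm (mollify u (eps_seq n) y * indicator {a..b} y) \<le> B * indicator {a..b} y"
      for n
      using abs_mollify_le[OF u u1 wd eps_seq_pos eps_seq_le_1 zero_less_one, of n]
      by (intro AE_I2) (auto simp: B_def split: split_indicator)
  qed (use mollify_measurable[OF u] in measurable)
  moreover note integral_L2_mult_window_tendsto[OF u, of a b]
  ultimately show ?thesis
    using integral_mollify_Icc[OF u eps_seq_pos ab] LIMSEQ_unique by simp
qed

lemma AE_eq_mollify_limit: "AE s in lborel. u s = mollify_limit u s"
proof -
  have [measurable]: "u \<in> borel_measurable lborel" using u by (rule L2_measurable)
  have int_u: "integrable lborel (\<lambda>s. u s * indicator {a..b} s)" for a b
    by (rule integrable_L2_mult_compact_support[OF u, of _ 1 a b]) auto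
  have int_v: "integrable lborel (\<lambda>s. mollify_limit u s * indicator {a..b} s)" for a b
  proof (rule Bochner_Integration.integrable_bound)
    define B where "B = mollifier_bound * ((1 + (\<integral>s. (u s)\<^sup>2 \<partial>lborel)) / 2)
                        + (1 + (\<integral>s. (u1 s)\<^sup>2 \<partial>lborel)) / 2"
    have "B \<ge> 0"
      unfolding B_def using mollifier_bound_pos by (auto intro!: integral_nonneg_AE)
    then show "AE s in lborel. norm (mollify_limit u s * indicator {a..b} s) \<le> norm (B * indicator {a..b} s)"
      using abs_mollify_limit_le[OF zero_less_one]
      by (intro AE_I2) (auto simp: B_def split: split_indicator)
    show "integrable lborel (\<lambda>s. B * indicator {a..b} s)"
      using integrable_indicator_Icc by simp
  qed measurable
  have "AE s in lborel. u s - mollify_limit u s = 0"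
  proof (rule AE_eq_0_if_interval_integrals_eq_0)
    show "integrable lborel (\<lambda>s. (u s - mollify_limit u s) * indicator {a..b} s)" for a b
      using int_u int_v by (simp add: left_diff_distrib)
    fix a b :: real
    assume ab: "a \<le> b"
    have "(\<integral>s. u s * indicator {a..b} s \<partial>lborel) =
          (\<integral>s. u s * (indicator {a<..} s - indicator {b<..} s) \<partial>lborel)"
      using AE_lborel_singleton[of a] ab
      by (intro integral_cong_AE) (auto split: split_indicator elim!: eventually_mono)
    then show "(\<integral>s. (u s - mollify_limit u s) * indicator {a..b} s \<partial>lborel) = 0"
      using int_u int_v integral_mollify_limit_Icc[OF ab] by (simp add: left_diff_distrib)
  qed
  then show ?thesis by simp
qed

end

lemma sq_le_if_abs_le_above_sqrt:
  fixes v L M :: real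
  assumes M: "M > 0" and L: "L \<ge> 0" and le: "\<And>t. t > 0 \<Longrightarrow> L \<le> t\<^sup>2 \<Longrightarrow> \<bar>v\<bar> \<le> M * t"
  shows "v\<^sup>2 \<le> M\<^sup>2 * L"
proof (cases "L > 0")
  case True
  have "\<bar>v\<bar> \<le> M * sqrt L" using le[of "sqrt L"] True by simp
  then have "\<bar>v\<bar>\<^sup>2 \<le> (M * sqrt L)\<^sup>2" by (rule power_mono) simp
  then show ?thesis using True by (simp add: power_mult_distrib)
next
  case False
  then have "L = 0" using L by simp
  have "\<bar>v\<bar> \<le> M * (\<bar>v\<bar> / (2 * M))" if "v \<noteq> 0"
    using le[of "\<bar>v\<bar> / (2 * M)"] that M \<open>L = 0\<close> by simp
  then show ?thesis using M \<open>L = 0\<close> by (cases "v = 0") (auto simp: field_simps)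
qed

definition sobolev_const :: real where
  "sobolev_const = (mollifier_bound + 1)\<^sup>2"

lemma sobolev_const_pos: "sobolev_const > 0"
  using mollifier_bound_pos by (simp add: sobolev_const_def)

theorem H1_sup_bound:
  assumes u: "L2 u" and u1: "L2 u1" and wd: "weak_deriv_of u1 u"
  shows "AE x in lborel. (u x)\<^sup>2 \<le> sobolev_const * ((\<integral>s. (u s)\<^sup>2 \<partial>lborel) + (\<integral>s. (u1 s)\<^sup>2 \<partial>lborel))"
  using AE_eq_mollify_limit[OF assms]
proof eventually_elim
  case (elim x)
  define U where "U = (\<integral>s. (u s)\<^sup>2 \<partial>lborel)"
  define U1 where "U1 = (\<integral>s. (u1 s)\<^sup>2 \<partial>lborel)"
  have U: "U \<ge> 0" "U1 \<ge> 0" unfolding U_def U1_def by (auto intro!: integral_nonneg_AE)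
  have "(mollify_limit u x)\<^sup>2 \<le> (mollifier_bound + 1)\<^sup>2 * (U + U1)"
  proof (rule sq_le_if_abs_le_above_sqrt)
    fix t :: real assume t: "t > 0" "U + U1 \<le> t\<^sup>2"
    then have "(t + U / t) / 2 \<le> t" "(t + U1 / t) / 2 \<le> t"
      using U by (auto simp: field_simps power2_eq_square)
    then have "mollifier_bound * ((t + U / t) / 2) + (t + U1 / t) / 2 \<le> (mollifier_bound + 1) * t"
      using mollifier_bound_pos by (simp add: distrib_right mult_left_mono add_mono)
    then show "\<bar>mollify_limit u x\<bar> \<le> (mollifier_bound + 1) * t"
      using abs_mollify_limit_le[OF assms t(1), of x] unfolding U_def U1_def by linarith
  qed (use mollifier_bound_pos U in auto)
  then show ?case using elim by (simp add: sobolev_const_def U_def U1_def)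
qed

section \<open>The nonlinearity: growth of \<open>G\<close> and the inequality \<open>(p + 2) F \<le> G\<close>\<close>

lemma linear_eq_sum_axis:
  fixes L :: "real^'n \<Rightarrow> 'b::real_vector"
  assumes "linear L"
  shows "L h = (\<Sum>i\<in>UNIV. h $ i *\<^sub>R L (axis i 1))"
proof -
  have "L h = L (\<Sum>i\<in>UNIV. h $ i *\<^sub>R axis i 1)"
    using basis_expansion[of h] by (simp add: scalar_mult_eq_scaleR)
  also have "\<dots> = (\<Sum>i\<in>UNIV. h $ i *\<^sub>R L (axis i 1))"
    by (simp add: real_vector.linear_sum[OF assms] linear_cmul[OF assms])
  finally show ?thesis .
qed

lemma has_derivative_grad:
  fixes F :: "real^4 \<Rightarrow> real"
  assumes "F differentiable (at w)"
  shows "(F has_derivative (\<lambda>h. grad F w \<bullet> h)) (at w)"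
proof -
  have d: "(F has_derivative frechet_derivative F (at w)) (at w)"
    using assms frechet_derivative_works by blast
  moreover have "frechet_derivative F (at w) = (\<lambda>h. grad F w \<bullet> h)"
  proof
    fix h
    show "frechet_derivative F (at w) h = grad F w \<bullet> h"
      using linear_eq_sum_axis[OF has_derivative_linear[OF d], of h]
      by (simp add: grad_def inner_vec_def mult.commute)
  qed
  ultimately show ?thesis by simp
qed

lemma has_derivative_hess:
  fixes F :: "real^4 \<Rightarrow> real"
  assumes "grad F differentiable (at w)"
  shows "(grad F has_derivative (\<lambda>h. hess F w *v h)) (at w)"
proof -
  have d: "(grad F has_derivative frechet_derivative (grad F) (at w)) (at w)"
    using assms frechet_derivative_works by blast
  moreover have "frechet_derivative (grad F) (at w) = (\<lambda>h. hess F w *v h)"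
  proof
    fix h
    show "frechet_derivative (grad F) (at w) h = hess F w *v h"
      using linear_eq_sum_axis[OF has_derivative_linear[OF d], of h]
      by (simp add: vec_eq_iff hess_def matrix_vector_mult_def mult.commute)
  qed
  ultimately show ?thesis by simp
qed

lemma onorm_matrix_vector_mult_le:
  fixes A :: "real^'n^'m"
  shows "onorm ((*v) A) \<le> real (CARD('m) * CARD('n)) * norm A"
proof -
  have "onorm ((*v) A) \<le> (\<Sum>i\<in>UNIV. \<Sum>j\<in>UNIV. \<bar>A $ i $ j\<bar>)"
    by (rule onorm_le_matrix_component_sum)
  also have "\<dots> \<le> (\<Sum>i\<in>(UNIV::'m set). \<Sum>j\<in>(UNIV::'n set). norm A)"
  proof (intro sum_mono)
    fix i j
    have "\<bar>A $ i $ j\<bar> \<le> norm (A $ i)" by (rule component_le_norm_cart)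
    also have "\<dots> \<le> norm A" by (rule Finite_Cartesian_Product.norm_nth_le)
    finally show "\<bar>A $ i $ j\<bar> \<le> norm A" .
  qed
  finally show ?thesis by simp
qed

context
  fixes F :: "real^4 \<Rightarrow> real"
  assumes F: "C2_R4 F"
begin

lemma has_derivative_F: "(F has_derivative (\<lambda>h. grad F w \<bullet> h)) (at w)"
  using F has_derivative_grad unfolding C2_R4_def by blast

lemma has_derivative_grad_F: "(grad F has_derivative (\<lambda>h. hess F w *v h)) (at w)"
  using F has_derivative_hess unfolding C2_R4_def by blast

lemma has_derivative_Gfun:
  "(Gfun F has_derivative (\<lambda>h. h \<bullet> grad F w + w \<bullet> (hess F w *v h))) (at w)"
proof -
  have "((\<lambda>x. x \<bullet> grad F x) has_derivative (\<lambda>h. w \<bullet> (hess F w *v h) + h \<bullet> grad F w)) (at w)"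
    by (rule has_derivative_inner[OF has_derivative_ident has_derivative_grad_F])
  moreover have "(\<lambda>h. w \<bullet> (hess F w *v h) + h \<bullet> grad F w) = (\<lambda>h. h \<bullet> grad F w + w \<bullet> (hess F w *v h))"
    by (simp add: fun_eq_iff)
  ultimately show ?thesis by (simp add: Gfun_def[abs_def])
qed

lemma inner_grad_Gfun: "h \<bullet> grad (Gfun F) w = h \<bullet> grad F w + w \<bullet> (hess F w *v h)"
proof -
  have "Gfun F differentiable (at w)"
    using has_derivative_Gfun by (auto simp: differentiable_def)
  then have "(Gfun F has_derivative (\<lambda>h. grad (Gfun F) w \<bullet> h)) (at w)"
    by (rule has_derivative_grad)
  from this has_derivative_Gfun[of w]
  have "(\<lambda>h. grad (Gfun F) w \<bullet> h) = (\<lambda>h. h \<bullet> grad F w + w \<bullet> (hess F w *v h))"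
    by (rule has_derivative_unique)
  from fun_cong[OF this, of h] show ?thesis by (simp add: inner_commute)
qed

lemma has_real_derivative_F_ray:
  "((\<lambda>t. F (t *\<^sub>R w)) has_real_derivative (grad F (t *\<^sub>R w) \<bullet> w)) (at t)"
proof -
  have "((\<lambda>t. F (t *\<^sub>R w)) has_derivative (\<lambda>s. grad F (t *\<^sub>R w) \<bullet> (s *\<^sub>R w))) (at t)"
    by (rule has_derivative_compose[OF _ has_derivative_F])
       (rule has_derivative_scaleR_left[OF has_derivative_ident])
  moreover have "(\<lambda>s. grad F (t *\<^sub>R w) \<bullet> (s *\<^sub>R w)) = (*) (grad F (t *\<^sub>R w) \<bullet> w)"
    by (rule ext) (simp add: mult.commute)
  ultimately show ?thesis unfolding has_field_derivative_def by (simp only:)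
qed

lemma has_real_derivative_Gfun_ray:
  "((\<lambda>t. Gfun F (t *\<^sub>R w)) has_real_derivative (w \<bullet> grad (Gfun F) (t *\<^sub>R w))) (at t)"
proof -
  have "((\<lambda>t. Gfun F (t *\<^sub>R w)) has_derivative
          (\<lambda>s. (s *\<^sub>R w) \<bullet> grad F (t *\<^sub>R w) + (t *\<^sub>R w) \<bullet> (hess F (t *\<^sub>R w) *v (s *\<^sub>R w)))) (at t)"
    by (rule has_derivative_compose[OF _ has_derivative_Gfun])
       (rule has_derivative_scaleR_left[OF has_derivative_ident])
  moreover have "(\<lambda>s. (s *\<^sub>R w) \<bullet> grad F (t *\<^sub>R w) + (t *\<^sub>R w) \<bullet> (hess F (t *\<^sub>R w) *v (s *\<^sub>R w)))
                 = (*) (w \<bullet> grad (Gfun F) (t *\<^sub>R w))"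
    by (rule ext) (simp add: inner_grad_Gfun matrix_vector_mult_scaleR distrib_left; algebra)
  ultimately show ?thesis unfolding has_field_derivative_def by (simp only:)
qed

text \<open>For \<open>k(t) = (p + 2) F(t w) - G(t w)\<close>, condition (a) gives
  \<open>t k'(t) = (p + 2) G(t w) - t w \<bullet> \<nabla>G(t w) \<le> 0\<close>, so \<open>k(1) \<le> k(0) = 0\<close> by the mean value theorem.\<close>
lemma F_le_Gfun:
  assumes F0: "F 0 = 0" and AR: "\<forall>w. w \<bullet> grad (Gfun F) w \<ge> (p + 2) * Gfun F w"
  shows "(p + 2) * F w \<le> Gfun F w"
proof -
  define k where "k t = (p + 2) * F (t *\<^sub>R w) - Gfun F (t *\<^sub>R w)" for t
  define k' where "k' t = (p + 2) * (grad F (t *\<^sub>R w) \<bullet> w) - w \<bullet> grad (Gfun F) (t *\<^sub>R w)" for t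
  have "(k has_real_derivative k' t) (at t)" for t
    unfolding k_def k'_def
    by (intro DERIV_diff DERIV_cmult has_real_derivative_F_ray has_real_derivative_Gfun_ray)
  then obtain z where z: "0 < z" "k 1 - k 0 = k' z"
    using MVT2[of 0 1 k k'] by auto
  have "z * k' z = (p + 2) * Gfun F (z *\<^sub>R w) - (z *\<^sub>R w) \<bullet> grad (Gfun F) (z *\<^sub>R w)"
    unfolding k'_def Gfun_def by (simp add: inner_commute right_diff_distrib mult.left_commute)
  also have "\<dots> \<le> 0" using AR[rule_format, of "z *\<^sub>R w"] by linarith
  finally have "k' z \<le> 0" using z(1) by (simp add: mult_le_0_iff)
  then show ?thesis using z(2) by (simp add: k_def F0 Gfun_def)
qed

text \<open>Along \<open>s \<mapsto> s g\<close> with \<open>g = \<nabla>F(0)\<close>, the quotient \<open>F(s g) / s\<close> and \<open>g \<bullet> \<nabla>F(s g)\<close> both tend to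
  \<open>|g|\<^sup>2\<close>, while \<open>(p + 2) F \<le> G\<close> forces the first to be at most \<open>1 / (p + 2)\<close> times the second.\<close>
lemma grad_F_0:
  assumes F0: "F 0 = 0" and p: "p > 0" and AR: "\<forall>w. w \<bullet> grad (Gfun F) w \<ge> (p + 2) * Gfun F w"
  shows "grad F 0 = 0"
proof -
  define g where "g = grad F 0"
  have "((\<lambda>s. (F (s *\<^sub>R g) - F (0 *\<^sub>R g)) / (s - 0)) \<longlongrightarrow> g \<bullet> g) (at 0)"
    using has_real_derivative_F_ray[of g 0] by (simp add: has_field_derivative_iff g_def)
  then have quotient: "((\<lambda>s. F (s *\<^sub>R g) / s) \<longlongrightarrow> g \<bullet> g) (at_right 0)"
    using F0 by (simp add: filterlim_at_split)
  have "isCont (grad F) (0 *\<^sub>R g)"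
    using has_derivative_grad_F has_derivative_continuous by blast
  moreover have "isCont (\<lambda>s. s *\<^sub>R g) 0" by (intro continuous_intros)
  ultimately have "isCont (\<lambda>s. grad F (s *\<^sub>R g)) 0"
    using continuous_at_compose[of 0 "\<lambda>s. s *\<^sub>R g" "grad F"] by (simp add: o_def)
  then have "((\<lambda>s. g \<bullet> grad F (s *\<^sub>R g)) \<longlongrightarrow> g \<bullet> g) (at 0)"
    by (auto intro!: tendsto_inner simp: isCont_def g_def)
  then have grad: "((\<lambda>s. g \<bullet> grad F (s *\<^sub>R g)) \<longlongrightarrow> g \<bullet> g) (at_right 0)"
    by (simp add: filterlim_at_split)
  have "\<forall>\<^sub>F s in at_right 0. (p + 2) * (F (s *\<^sub>R g) / s) \<le> g \<bullet> grad F (s *\<^sub>R g)"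
    using eventually_at_right_less[of "0::real"]
  proof eventually_elim
    case (elim s)
    have "(p + 2) * F (s *\<^sub>R g) \<le> s * (g \<bullet> grad F (s *\<^sub>R g))"
      using F_le_Gfun[OF F0 AR, of "s *\<^sub>R g"] by (simp add: Gfun_def)
    then show ?case using elim by (simp add: field_simps)
  qed
  then have "(p + 2) * (g \<bullet> g) \<le> g \<bullet> g"
    by (rule tendsto_le[OF trivial_limit_at_right_real grad tendsto_mult[OF tendsto_const quotient]])
  then have "(p + 1) * (g \<bullet> g) \<le> 0" by (simp add: algebra_simps)
  then have "g \<bullet> g \<le> 0" using p by (simp add: mult_le_0_iff)
  then have "g \<bullet> g = 0" using inner_ge_zero[of g] by linarith
  then show ?thesis by (simp add: g_def)
qed

lemma abs_Gfun_le:
  assumes grad0: "grad F 0 = 0" and q: "q1 > 0" "q2 > 0" and C: "C > 0"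
    and hess: "\<forall>w. norm (hess F w) \<le> C * (norm w powr q1 + norm w powr q2)"
  shows "\<bar>Gfun F w\<bar> \<le> 16 * C * (norm w powr q1 + norm w powr q2) * (norm w)\<^sup>2"
proof -
  define B where "B = 16 * C * (norm w powr q1 + norm w powr q2)"
  have "norm (grad F w - grad F 0) \<le> B * norm (w - 0)"
  proof (rule differentiable_bound[of "closed_segment 0 w" "grad F" "\<lambda>x h. hess F x *v h"])
    show "convex (closed_segment 0 w)" by simp
    show "(grad F has_derivative (\<lambda>h. hess F x *v h)) (at x within closed_segment 0 w)" for x
      by (rule has_derivative_subset[OF has_derivative_grad_F]) simp
    show "0 \<in> closed_segment 0 w" "w \<in> closed_segment 0 w" by (rule ends_in_segment)+
    fix x assume "x \<in> closed_segment 0 w"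
    then have "norm x \<le> norm w" using segment_bound(1) by fastforce
    then have "norm x powr q1 + norm x powr q2 \<le> norm w powr q1 + norm w powr q2"
      using q by (intro add_mono powr_mono2) auto
    then have "C * (norm x powr q1 + norm x powr q2) \<le> C * (norm w powr q1 + norm w powr q2)"
      using C by (intro mult_left_mono) auto
    then have "norm (hess F x) \<le> C * (norm w powr q1 + norm w powr q2)"
      using hess[rule_format, of x] by linarith
    moreover have "onorm (\<lambda>h. hess F x *v h) \<le> 16 * norm (hess F x)"
      using onorm_matrix_vector_mult_le[of "hess F x"] by simp
    ultimately show "onorm (\<lambda>h. hess F x *v h) \<le> B"
      unfolding B_def by linarith
  qed
  then have "norm (grad F w) \<le> B * norm w" using grad0 by simp
  then have "norm w * norm (grad F w) \<le> norm w * (B * norm w)"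
    by (rule mult_left_mono) simp
  then have "\<bar>Gfun F w\<bar> \<le> norm w * (B * norm w)"
    unfolding Gfun_def using Cauchy_Schwarz_ineq2[of w "grad F w"] by linarith
  also have "\<dots> = B * (norm w)\<^sup>2" by (simp add: power2_eq_square)
  finally show ?thesis unfolding B_def .
qed

end

section \<open>The quadratic part on \<open>X = H\<^sup>2(\<real>) \<times> H\<^sup>2(\<real>)\<close>\<close>

lemma H2_weak_derivs:
  assumes "H2 u"
  shows "L2 u" "L2 (wd1 u)" "L2 (wd2 u)" "weak_deriv_of (wd1 u) u" "weak_deriv_of (wd2 u) (wd1 u)"
proof -
  have "\<exists>u1. L2 u1 \<and> weak_deriv_of u1 u \<and> (\<exists>u2. L2 u2 \<and> weak_deriv_of u2 u1)"
    using assms unfolding H2_def by blast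
  then have wd1: "L2 (wd1 u) \<and> weak_deriv_of (wd1 u) u \<and> (\<exists>u2. L2 u2 \<and> weak_deriv_of u2 (wd1 u))"
    unfolding wd1_def by (rule someI_ex)
  then have "L2 (wd2 u) \<and> weak_deriv_of (wd2 u) (wd1 u)"
    unfolding wd2_def by (intro someI_ex[of "\<lambda>u2. L2 u2 \<and> weak_deriv_of u2 (wd1 u)"]) blast
  with wd1 assms show "L2 u" "L2 (wd1 u)" "L2 (wd2 u)" "weak_deriv_of (wd1 u) u"
    "weak_deriv_of (wd2 u) (wd1 u)"
    by (auto simp: H2_def)
qed

definition X_density :: "(real \<Rightarrow> real) \<Rightarrow> (real \<Rightarrow> real) \<Rightarrow> real \<Rightarrow> real" where
  "X_density \<psi> v x = (\<psi> x)\<^sup>2 + (wd1 \<psi> x)\<^sup>2 + (wd2 \<psi> x)\<^sup>2 + (v x)\<^sup>2 + (wd1 v x)\<^sup>2 + (wd2 v x)\<^sup>2"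

definition X_norm_sq :: "(real \<Rightarrow> real) \<Rightarrow> (real \<Rightarrow> real) \<Rightarrow> real" where
  "X_norm_sq \<psi> v = (\<integral>x. X_density \<psi> v x \<partial>lborel)"

lemma X_density_nonneg: "X_density \<psi> v x \<ge> 0"
  by (simp add: X_density_def)

lemma integrable_X_density: "H2 \<psi> \<Longrightarrow> H2 v \<Longrightarrow> integrable lborel (X_density \<psi> v)"
  unfolding X_density_def[abs_def]
  by (intro Bochner_Integration.integrable_add L2_integrable_sq H2_weak_derivs)

lemma X_norm_sq_eq_sum:
  "H2 \<psi> \<Longrightarrow> H2 v \<Longrightarrow> X_norm_sq \<psi> v =
     (\<integral>x. (\<psi> x)\<^sup>2 \<partial>lborel) + (\<integral>x. (wd1 \<psi> x)\<^sup>2 \<partial>lborel) + (\<integral>x. (wd2 \<psi> x)\<^sup>2 \<partial>lborel)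
     + (\<integral>x. (v x)\<^sup>2 \<partial>lborel) + (\<integral>x. (wd1 v x)\<^sup>2 \<partial>lborel) + (\<integral>x. (wd2 v x)\<^sup>2 \<partial>lborel)"
  unfolding X_norm_sq_def X_density_def
  by (simp add: Bochner_Integration.integrable_add L2_integrable_sq H2_weak_derivs)

lemma X_norm_sq_pos:
  assumes "H2 \<psi>" "H2 v" and nonzero: "\<not> (AE x in lborel. \<psi> x = 0 \<and> v x = 0)"
  shows "X_norm_sq \<psi> v > 0"
proof -
  have "X_norm_sq \<psi> v \<ge> 0"
    unfolding X_norm_sq_def by (rule integral_nonneg_AE) (simp add: X_density_nonneg)
  moreover have "X_norm_sq \<psi> v \<noteq> 0"
  proof
    assume "X_norm_sq \<psi> v = 0"
    then have "AE x in lborel. X_density \<psi> v x = 0"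
      using integral_nonneg_eq_0_iff_AE[OF integrable_X_density[OF assms(1,2)]] X_density_nonneg
      unfolding X_norm_sq_def by auto
    then have "AE x in lborel. \<psi> x = 0 \<and> v x = 0"
      by eventually_elim (auto simp: X_density_def add_nonneg_eq_0_iff)
    with nonzero show False by simp
  qed
  ultimately show ?thesis by simp
qed

definition jet :: "(real \<Rightarrow> real) \<Rightarrow> (real \<Rightarrow> real) \<Rightarrow> real \<Rightarrow> real^4" where
  "jet \<psi> v x = vec4 (\<psi> x) (wd1 \<psi> x) (v x) (wd1 v x)"

lemma norm_vec4_sq: "(norm (vec4 p q r s))\<^sup>2 = p\<^sup>2 + q\<^sup>2 + r\<^sup>2 + s\<^sup>2"
proof -
  have "vec4 p q r s $ 1 = p" "vec4 p q r s $ 2 = q" "vec4 p q r s $ 3 = r" "vec4 p q r s $ 4 = s"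
    by (simp_all add: vec4_def vector_def)
  then show ?thesis
    unfolding power2_norm_eq_inner by (simp add: inner_vec_def sum_4 power2_eq_square)
qed

lemma norm_jet_sq_le_X_density: "(norm (jet \<psi> v x))\<^sup>2 \<le> X_density \<psi> v x"
  by (simp add: jet_def norm_vec4_sq X_density_def)

lemma norm_jet_sq_le_X_norm_sq:
  assumes "H2 \<psi>" "H2 v"
  shows "AE x in lborel. (norm (jet \<psi> v x))\<^sup>2 \<le> 2 * sobolev_const * X_norm_sq \<psi> v"
proof -
  note H = H2_weak_derivs[OF assms(1)] H2_weak_derivs[OF assms(2)]
  define A0 A1 A2 B0 B1 B2 where
    "A0 = (\<integral>x. (\<psi> x)\<^sup>2 \<partial>lborel)" and "A1 = (\<integral>x. (wd1 \<psi> x)\<^sup>2 \<partial>lborel)"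
    and "A2 = (\<integral>x. (wd2 \<psi> x)\<^sup>2 \<partial>lborel)" and "B0 = (\<integral>x. (v x)\<^sup>2 \<partial>lborel)"
    and "B1 = (\<integral>x. (wd1 v x)\<^sup>2 \<partial>lborel)" and "B2 = (\<integral>x. (wd2 v x)\<^sup>2 \<partial>lborel)"
  have nonneg: "A0 \<ge> 0" "A2 \<ge> 0" "B0 \<ge> 0" "B2 \<ge> 0"
    unfolding A0_def A2_def B0_def B2_def by (auto intro!: integral_nonneg_AE)
  have sum: "X_norm_sq \<psi> v = A0 + A1 + A2 + B0 + B1 + B2"
    unfolding A0_def A1_def A2_def B0_def B1_def B2_def by (rule X_norm_sq_eq_sum[OF assms])
  have "AE x in lborel. (\<psi> x)\<^sup>2 \<le> sobolev_const * (A0 + A1)"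
    and "AE x in lborel. (wd1 \<psi> x)\<^sup>2 \<le> sobolev_const * (A1 + A2)"
    and "AE x in lborel. (v x)\<^sup>2 \<le> sobolev_const * (B0 + B1)"
    and "AE x in lborel. (wd1 v x)\<^sup>2 \<le> sobolev_const * (B1 + B2)"
    unfolding A0_def A1_def A2_def B0_def B1_def B2_def using H by (auto intro!: H1_sup_bound)
  then show ?thesis
  proof eventually_elim
    case (elim x)
    have "sobolev_const * (A0 + A1) + sobolev_const * (A1 + A2) + sobolev_const * (B0 + B1)
          + sobolev_const * (B1 + B2) \<le> sobolev_const * (2 * X_norm_sq \<psi> v)"
      unfolding sum distrib_left[symmetric] using nonneg sobolev_const_pos
      by (intro mult_left_mono) auto
    with elim show ?case by (simp add: jet_def norm_vec4_sq)
  qed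
qed

definition Iom_density ::
    "real \<Rightarrow> real \<Rightarrow> real \<Rightarrow> real \<Rightarrow> real \<Rightarrow> real \<Rightarrow> real \<Rightarrow> (real \<Rightarrow> real) \<Rightarrow> (real \<Rightarrow> real) \<Rightarrow> real \<Rightarrow> real"
  where
  "Iom_density a a2 c c2 b b2 \<omega> \<psi> v x =
     ((\<psi> x)\<^sup>2 - c * (wd1 \<psi> x)\<^sup>2 + c2 * (wd2 \<psi> x)\<^sup>2 + (v x)\<^sup>2 - a * (wd1 v x)\<^sup>2 + a2 * (wd2 v x)\<^sup>2)
     - 2 * \<omega> * (\<psi> x * v x + b * wd1 \<psi> x * wd1 v x + b2 * wd2 \<psi> x * wd2 v x)"

lemma Iom_eq_integral:
  assumes "H2 \<psi>" "H2 v"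
  shows "integrable lborel (Iom_density a a2 c c2 b b2 \<omega> \<psi> v)"
    and "Iom a a2 c c2 b b2 \<omega> \<psi> v = (\<integral>x. Iom_density a a2 c c2 b b2 \<omega> \<psi> v x \<partial>lborel)"
proof -
  note H = H2_weak_derivs[OF assms(1)] H2_weak_derivs[OF assms(2)]
  have "integrable lborel (\<lambda>x. (\<psi> x)\<^sup>2 - c * (wd1 \<psi> x)\<^sup>2 + c2 * (wd2 \<psi> x)\<^sup>2
                                + (v x)\<^sup>2 - a * (wd1 v x)\<^sup>2 + a2 * (wd2 v x)\<^sup>2)"
    using H by (intro Bochner_Integration.integrable_add Bochner_Integration.integrable_diff
        Bochner_Integration.integrable_mult_right L2_integrable_sq)
  moreover have "integrable lborel (\<lambda>x. \<psi> x * v x + b * wd1 \<psi> x * wd1 v x + b2 * wd2 \<psi> x * wd2 v x)"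
    using H integrable_L2_mult by (simp add: mult.assoc)
  ultimately show "integrable lborel (Iom_density a a2 c c2 b b2 \<omega> \<psi> v)"
    and "Iom a a2 c c2 b b2 \<omega> \<psi> v = (\<integral>x. Iom_density a a2 c c2 b b2 \<omega> \<psi> v x \<partial>lborel)"
    unfolding Iom_def I1_def I2_def Iom_density_def[abs_def]
    by (simp_all add: Bochner_Integration.integral_diff)
qed

definition coercivity_const :: "real \<Rightarrow> real \<Rightarrow> real \<Rightarrow> real \<Rightarrow> real \<Rightarrow> real \<Rightarrow> real \<Rightarrow> real" where
  "coercivity_const a a2 c c2 b b2 \<omega> =
     min (min (min (min (1 - \<bar>\<omega>\<bar>) (- c - \<bar>\<omega>\<bar> * b)) (- a - \<bar>\<omega>\<bar> * b)) (c2 - \<bar>\<omega>\<bar> * b2)) (a2 - \<bar>\<omega>\<bar> * b2)"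

lemma coercivity_const_pos:
  assumes "b > 0" "b2 > 0" "\<bar>\<omega>\<bar> < 1" "\<bar>\<omega>\<bar> < - a / b" "\<bar>\<omega>\<bar> < - c / b"
    "\<bar>\<omega>\<bar> < a2 / b2" "\<bar>\<omega>\<bar> < c2 / b2"
  shows "coercivity_const a a2 c c2 b b2 \<omega> > 0"
proof -
  have "\<bar>\<omega>\<bar> * b < - a" "\<bar>\<omega>\<bar> * b < - c" "\<bar>\<omega>\<bar> * b2 < a2" "\<bar>\<omega>\<bar> * b2 < c2"
    using mult_strict_right_mono[OF assms(4) assms(1)] mult_strict_right_mono[OF assms(5) assms(1)]
      mult_strict_right_mono[OF assms(6) assms(2)] mult_strict_right_mono[OF assms(7) assms(2)] assms(1,2)
    by simp_all
  then show ?thesis using assms(3) by (simp add: coercivity_const_def)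
qed

lemma cross_term_le:
  fixes \<omega> b x y :: real
  assumes "b \<ge> 0"
  shows "2 * \<omega> * (b * x * y) \<le> \<bar>\<omega>\<bar> * b * (x\<^sup>2 + y\<^sup>2)"
proof -
  have "2 * \<bar>x * y\<bar> \<le> x\<^sup>2 + y\<^sup>2"
    using sum_squares_bound[of "\<bar>x\<bar>" "\<bar>y\<bar>"] by (simp add: abs_mult power2_eq_square)
  then have "\<bar>\<omega>\<bar> * b * (2 * \<bar>x * y\<bar>) \<le> \<bar>\<omega>\<bar> * b * (x\<^sup>2 + y\<^sup>2)"
    using assms by (intro mult_left_mono) auto
  moreover have "2 * \<omega> * (b * x * y) \<le> \<bar>\<omega>\<bar> * b * (2 * \<bar>x * y\<bar>)"
    using assms abs_ge_self[of "2 * \<omega> * (b * x * y)"] by (simp add: abs_mult)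
  ultimately show ?thesis by linarith
qed

lemma Iom_density_coercive:
  assumes "b > 0" "b2 > 0"
  shows "coercivity_const a a2 c c2 b b2 \<omega> * X_density \<psi> v x \<le> Iom_density a a2 c c2 b b2 \<omega> \<psi> v x"
proof -
  define \<delta> where "\<delta> = coercivity_const a a2 c c2 b b2 \<omega>"
  have \<delta>: "\<delta> \<le> 1 - \<bar>\<omega>\<bar>" "\<delta> \<le> - c - \<bar>\<omega>\<bar> * b" "\<delta> \<le> - a - \<bar>\<omega>\<bar> * b"
    "\<delta> \<le> c2 - \<bar>\<omega>\<bar> * b2" "\<delta> \<le> a2 - \<bar>\<omega>\<bar> * b2"
    unfolding \<delta>_def coercivity_const_def by linarith+
  let ?P = "\<psi> x" and ?P1 = "wd1 \<psi> x" and ?P2 = "wd2 \<psi> x"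
    and ?V = "v x" and ?V1 = "wd1 v x" and ?V2 = "wd2 v x"
  have "2 * \<omega> * (1 * ?P * ?V) \<le> \<bar>\<omega>\<bar> * 1 * (?P\<^sup>2 + ?V\<^sup>2)"
    and "2 * \<omega> * (b * ?P1 * ?V1) \<le> \<bar>\<omega>\<bar> * b * (?P1\<^sup>2 + ?V1\<^sup>2)"
    and "2 * \<omega> * (b2 * ?P2 * ?V2) \<le> \<bar>\<omega>\<bar> * b2 * (?P2\<^sup>2 + ?V2\<^sup>2)"
    using assms by (intro cross_term_le; simp)+
  moreover have "\<delta> * ?P\<^sup>2 \<le> (1 - \<bar>\<omega>\<bar>) * ?P\<^sup>2" "\<delta> * ?V\<^sup>2 \<le> (1 - \<bar>\<omega>\<bar>) * ?V\<^sup>2"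
    "\<delta> * ?P1\<^sup>2 \<le> (- c - \<bar>\<omega>\<bar> * b) * ?P1\<^sup>2" "\<delta> * ?V1\<^sup>2 \<le> (- a - \<bar>\<omega>\<bar> * b) * ?V1\<^sup>2"
    "\<delta> * ?P2\<^sup>2 \<le> (c2 - \<bar>\<omega>\<bar> * b2) * ?P2\<^sup>2" "\<delta> * ?V2\<^sup>2 \<le> (a2 - \<bar>\<omega>\<bar> * b2) * ?V2\<^sup>2"
    using \<delta> by (auto intro: mult_right_mono)
  ultimately show ?thesis
    unfolding \<delta>_def[symmetric] X_density_def Iom_density_def by (simp add: algebra_simps)
qed

lemma Iom_coercive:
  assumes "H2 \<psi>" "H2 v" "b > 0" "b2 > 0"
  shows "coercivity_const a a2 c c2 b b2 \<omega> * X_norm_sq \<psi> v \<le> Iom a a2 c c2 b b2 \<omega> \<psi> v"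
proof -
  have "coercivity_const a a2 c c2 b b2 \<omega> * X_norm_sq \<psi> v =
        (\<integral>x. coercivity_const a a2 c c2 b b2 \<omega> * X_density \<psi> v x \<partial>lborel)"
    by (simp add: X_norm_sq_def)
  also have "\<dots> \<le> (\<integral>x. Iom_density a a2 c c2 b b2 \<omega> \<psi> v x \<partial>lborel)"
    using integrable_X_density[OF assms(1,2)] Iom_eq_integral(1)[OF assms(1,2)]
      Iom_density_coercive[OF assms(3,4)]
    by (intro integral_mono) auto
  finally show ?thesis using Iom_eq_integral(2)[OF assms(1,2)] by simp
qed

section \<open>Minimizing sequences on the Nehari manifold\<close>

lemma bounded_range_if_scaled_le_convergent:
  fixes f g :: "nat \<Rightarrow> real"
  assumes "k > 0" "\<And>n. 0 \<le> f n" "\<And>n. k * f n \<le> g n" "convergent g"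
  shows "bounded (range f)"
proof -
  obtain M where M: "\<And>n. norm (g n) \<le> M"
    using convergent_imp_Bseq[OF assms(4)] by (auto simp: Bseq_def)
  have "\<bar>f n\<bar> \<le> M / k" for n
    using assms(1) assms(2,3)[of n] M[of n] by (simp add: field_simps)
  then show ?thesis by (auto simp: bounded_iff)
qed

lemma bounded_range_imp_subseq_tendsto_pos:
  fixes f :: "nat \<Rightarrow> real"
  assumes "bounded (range f)" "L0 > 0" "\<And>n. L0 \<le> f n"
  shows "\<exists>L>0. \<exists>r. strict_mono r \<and> (\<lambda>n. f (r n)) \<longlonglongrightarrow> L"
proof -
  obtain r where r: "strict_mono r" "monoseq (\<lambda>n. f (r n))"
    using seq_monosub by blast
  have "Bseq (\<lambda>n. f (r n))"
    using assms(1) by (auto simp: Bseq_eq_bounded intro: bounded_subset)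
  then obtain L where L: "(\<lambda>n. f (r n)) \<longlonglongrightarrow> L"
    using Bseq_monoseq_convergent[OF _ r(2)] by (auto simp: convergent_def)
  have "L0 \<le> L" using assms(3) by (intro LIMSEQ_le_const[OF L]) auto
  with assms(2) L r(1) show ?thesis by (intro exI[of _ L]) auto
qed


lemma min_powr_le_if_le_powr_sum:
  fixes s \<epsilon> q1 q2 :: real
  assumes q: "0 < q1" "q1 \<le> q2" and s: "s \<ge> 0" and \<epsilon>: "\<epsilon> > 0"
    and le: "\<epsilon> \<le> s powr q1 + s powr q2"
  shows "min 1 ((\<epsilon> / 2) powr (1 / q1)) \<le> s"
proof (cases "s \<ge> 1")
  case False
  have "s powr q2 \<le> s powr q1" using False s q by (intro powr_mono') auto
  then have "\<epsilon> / 2 \<le> s powr q1" using le by simp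
  then have "(\<epsilon> / 2) powr (1 / q1) \<le> (s powr q1) powr (1 / q1)"
    using \<epsilon> q by (intro powr_mono2) auto
  also have "\<dots> = s" using q s by (simp add: powr_powr)
  finally show ?thesis by simp
qed simp

context
  fixes a a2 c c2 b b2 \<omega> p q1 q2 C :: real and F :: "real^4 \<Rightarrow> real"
  assumes b: "b > 0" "b2 > 0" and coercive: "coercivity_const a a2 c c2 b b2 \<omega> > 0"
    and F: "C2_R4 F" "F 0 = 0"
    and p: "p > 0" and AR: "\<forall>w. w \<bullet> grad (Gfun F) w \<ge> (p + 2) * Gfun F w"
    and q: "0 < q1" "q1 \<le> q2" and C: "C > 0"
    and hess: "\<forall>w. norm (hess F w) \<le> C * (norm w powr q1 + norm w powr q2)"
begin

lemma Nfun_le_X_norm_sq: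
  assumes H: "H2 \<psi>" "H2 v" and G: "integrable lborel (\<lambda>x. Gfun F (jet \<psi> v x))"
  defines "s \<equiv> sqrt (2 * sobolev_const * X_norm_sq \<psi> v)"
  shows "Nfun F \<psi> v \<le> 16 * C * (s powr q1 + s powr q2) * X_norm_sq \<psi> v"
proof -
  define M where "M = 16 * C * (s powr q1 + s powr q2)"
  have "AE x in lborel. Gfun F (jet \<psi> v x) \<le> M * X_density \<psi> v x"
    using norm_jet_sq_le_X_norm_sq[OF H]
  proof eventually_elim
    case (elim x)
    define n where "n = norm (jet \<psi> v x)"
    have "n \<le> s" unfolding s_def n_def using elim by (simp add: real_le_rsqrt)
    then have "n powr q1 + n powr q2 \<le> s powr q1 + s powr q2"
      using q by (intro add_mono powr_mono2) (auto simp: n_def)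
    then have "16 * C * (n powr q1 + n powr q2) \<le> M"
      unfolding M_def using C by simp
    moreover have "n\<^sup>2 \<le> X_density \<psi> v x"
      unfolding n_def by (rule norm_jet_sq_le_X_density)
    moreover have "M \<ge> 0" unfolding M_def using C by simp
    ultimately have "16 * C * (n powr q1 + n powr q2) * n\<^sup>2 \<le> M * X_density \<psi> v x"
      by (intro mult_mono) auto
    moreover have "\<bar>Gfun F (jet \<psi> v x)\<bar> \<le> 16 * C * (n powr q1 + n powr q2) * n\<^sup>2"
      unfolding n_def using q C hess by (intro abs_Gfun_le[OF F(1) grad_F_0[OF F p AR]]) auto
    ultimately show ?case by simp
  qed
  then have "(\<integral>x. Gfun F (jet \<psi> v x) \<partial>lborel) \<le> (\<integral>x. M * X_density \<psi> v x \<partial>lborel)"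
    using integrable_X_density[OF H] by (intro integral_mono_AE[OF G]) auto
  then show ?thesis by (simp add: Nfun_def jet_def X_norm_sq_def M_def)
qed

context
  fixes \<psi> v :: "real \<Rightarrow> real"
  assumes Nehari: "(\<psi>, v) \<in> Mnz a a2 c c2 b b2 F \<omega>"
begin

lemma Nehari_D: "H2 \<psi>" "H2 v" "\<not> (AE x in lborel. \<psi> x = 0 \<and> v x = 0)"
  and Nehari_Iom_eq_Nfun: "Iom a a2 c c2 b b2 \<omega> \<psi> v = Nfun F \<psi> v"
  using Nehari by (simp_all add: Mnz_def Pom_def)

lemma Nehari_coercive:
  "coercivity_const a a2 c c2 b b2 \<omega> * X_norm_sq \<psi> v \<le> Iom a a2 c c2 b b2 \<omega> \<psi> v"
  using Iom_coercive[OF Nehari_D(1,2) b] .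

lemma Nehari_Iom_pos: "Iom a a2 c c2 b b2 \<omega> \<psi> v > 0"
  using Nehari_coercive X_norm_sq_pos[OF Nehari_D] coercive
  by (meson mult_pos_pos order_less_le_trans)

text \<open>A non-integrable \<open>G\<close> would give the junk value \<open>N = 0\<close>, contradicting \<open>N = I > 0\<close>.\<close>
lemma Nehari_integrable_Gfun: "integrable lborel (\<lambda>x. Gfun F (jet \<psi> v x))"
proof (rule ccontr)
  assume "\<not> ?thesis"
  then have "Nfun F \<psi> v = 0"
    unfolding Nfun_def jet_def by (simp add: not_integrable_integral_eq)
  then show False using Nehari_Iom_pos Nehari_Iom_eq_Nfun by simp
qed

text \<open>Coercivity, \<open>I = N\<close> and the bound on \<open>N\<close> give \<open>\<delta> \<le> 16 C (s\<^sup>q\<^sup>1 + s\<^sup>q\<^sup>2)\<close> with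
  \<open>s\<^sup>2 = 2 sobolev_const \<parallel>(\<psi>, v)\<parallel>\<^sup>2\<^sub>X\<close>; so \<open>s\<close>, and with it \<open>I\<close>, is bounded below.\<close>
lemma Nehari_Iom_lower_bound:
  defines "\<delta> \<equiv> coercivity_const a a2 c c2 b b2 \<omega>"
  shows "\<delta> * (min 1 ((\<delta> / (32 * C)) powr (1 / q1)))\<^sup>2 / (2 * sobolev_const) \<le> Iom a a2 c c2 b b2 \<omega> \<psi> v"
proof -
  define \<Lambda> where "\<Lambda> = X_norm_sq \<psi> v"
  define s where "s = sqrt (2 * sobolev_const * \<Lambda>)"
  define m where "m = min 1 ((\<delta> / (32 * C)) powr (1 / q1))"
  have \<Lambda>: "\<Lambda> > 0" unfolding \<Lambda>_def by (rule X_norm_sq_pos[OF Nehari_D])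
  have s: "s \<ge> 0" "s\<^sup>2 = 2 * sobolev_const * \<Lambda>"
    unfolding s_def using \<Lambda> sobolev_const_pos by auto
  have "\<delta> * \<Lambda> \<le> 16 * C * (s powr q1 + s powr q2) * \<Lambda>"
    using Nehari_coercive Nehari_Iom_eq_Nfun Nfun_le_X_norm_sq[OF Nehari_D(1,2) Nehari_integrable_Gfun]
    unfolding \<delta>_def \<Lambda>_def s_def by linarith
  then have "\<delta> \<le> 16 * C * (s powr q1 + s powr q2)"
    using \<Lambda> by (rule mult_right_le_imp_le)
  then have le: "\<delta> / (16 * C) \<le> s powr q1 + s powr q2"
    using C by (simp add: pos_divide_le_eq mult.commute)
  have "\<delta> / (16 * C) > 0" using coercive C by (simp add: \<delta>_def)
  from min_powr_le_if_le_powr_sum[OF q s(1) this le]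
  have "min 1 ((\<delta> / (16 * C) / 2) powr (1 / q1)) \<le> s" .
  then have "m \<le> s" by (simp add: m_def)
  moreover have "m \<ge> 0" by (simp add: m_def)
  ultimately have "m\<^sup>2 \<le> 2 * sobolev_const * \<Lambda>"
    using s(2) power_mono by metis
  then have "\<delta> * m\<^sup>2 / (2 * sobolev_const) \<le> \<delta> * \<Lambda>"
    using coercive sobolev_const_pos by (simp add: \<delta>_def field_simps)
  also have "\<dots> \<le> Iom a a2 c c2 b b2 \<omega> \<psi> v"
    using Nehari_coercive unfolding \<delta>_def \<Lambda>_def .
  finally show ?thesis unfolding m_def .
qed

lemma Nehari_Kfun_le: "Kfun F \<psi> v \<le> Iom a a2 c c2 b b2 \<omega> \<psi> v / (p + 2)"
proof (cases "integrable lborel (\<lambda>x. F (jet \<psi> v x))")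
  case True
  have "Kfun F \<psi> v = (\<integral>x. F (jet \<psi> v x) \<partial>lborel)" by (simp add: Kfun_def jet_def)
  also have "\<dots> \<le> (\<integral>x. Gfun F (jet \<psi> v x) / (p + 2) \<partial>lborel)"
  proof (rule integral_mono)
    show "F (jet \<psi> v x) \<le> Gfun F (jet \<psi> v x) / (p + 2)" for x
      using F_le_Gfun[OF F AR, of "jet \<psi> v x"] p by (simp add: pos_le_divide_eq mult.commute)
  qed (use True Nehari_integrable_Gfun in auto)
  also have "\<dots> = Iom a a2 c c2 b b2 \<omega> \<psi> v / (p + 2)"
    by (simp add: Nehari_Iom_eq_Nfun Nfun_def jet_def)
  finally show ?thesis .
next
  case False
  then show ?thesis
    using Nehari_Iom_pos p by (simp add: Kfun_def jet_def not_integrable_integral_eq)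
qed

lemma Nehari_Jom_lower_bound:
  "p / (2 * (p + 2)) * Iom a a2 c c2 b b2 \<omega> \<psi> v \<le> Jom a a2 c c2 b b2 F \<omega> \<psi> v"
proof -
  have "p / (2 * (p + 2)) * Iom a a2 c c2 b b2 \<omega> \<psi> v =
        Iom a a2 c c2 b b2 \<omega> \<psi> v / 2 - Iom a a2 c c2 b b2 \<omega> \<psi> v / (p + 2)"
    using p by (simp add: field_simps)
  also have "\<dots> \<le> Jom a a2 c c2 b b2 F \<omega> \<psi> v"
    using Nehari_Kfun_le by (simp add: Jom_def)
  finally show ?thesis .
qed

end

lemma Nehari_Iom_uniform_lower_bound:
  "\<exists>L0>0. \<forall>\<psi> v. (\<psi>, v) \<in> Mnz a a2 c c2 b b2 F \<omega> \<longrightarrow> L0 \<le> Iom a a2 c c2 b b2 \<omega> \<psi> v"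
proof -
  define \<delta> where "\<delta> = coercivity_const a a2 c c2 b b2 \<omega>"
  have "min 1 ((\<delta> / (32 * C)) powr (1 / q1)) > 0" using coercive C by (simp add: \<delta>_def)
  then have "\<delta> * (min 1 ((\<delta> / (32 * C)) powr (1 / q1)))\<^sup>2 / (2 * sobolev_const) > 0"
    using coercive sobolev_const_pos
    by (intro divide_pos_pos mult_pos_pos zero_less_power) (auto simp: \<delta>_def)
  with Nehari_Iom_lower_bound show ?thesis unfolding \<delta>_def by blast
qed

lemma Nehari_sequence_Iom_bounded:
  assumes Nehari: "\<And>n. (\<psi>s n, vs n) \<in> Mnz a a2 c c2 b b2 F \<omega>"
    and J: "convergent (\<lambda>n. Jom a a2 c c2 b b2 F \<omega> (\<psi>s n) (vs n))"
  shows "bounded (range (\<lambda>n. Iom a a2 c c2 b b2 \<omega> (\<psi>s n) (vs n)))"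
proof (rule bounded_range_if_scaled_le_convergent[OF _ _ _ J])
  show "p / (2 * (p + 2)) > 0" using p by simp
  show "0 \<le> Iom a a2 c c2 b b2 \<omega> (\<psi>s n) (vs n)" for n
    using Nehari_Iom_pos[OF Nehari] by (simp add: less_imp_le)
  show "p / (2 * (p + 2)) * Iom a a2 c c2 b b2 \<omega> (\<psi>s n) (vs n) \<le> Jom a a2 c c2 b b2 F \<omega> (\<psi>s n) (vs n)"
    for n by (rule Nehari_Jom_lower_bound[OF Nehari])
qed

end

theorem lemma2p6:
  fixes a c a2 c2 b b2 \<omega> :: real
    and F :: "real^4 \<Rightarrow> real"
    and \<psi>s vs :: "nat \<Rightarrow> real \<Rightarrow> real"
  assumes "a < 0" "c < 0" "a2 > 0" "c2 > 0" "b > 0" "b2 > 0"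
    and "0 < \<bar>\<omega>\<bar>" "\<bar>\<omega>\<bar> < 1" "\<bar>\<omega>\<bar> < - a / b" "\<bar>\<omega>\<bar> < - c / b"
        "\<bar>\<omega>\<bar> < a2 / b2" "\<bar>\<omega>\<bar> < c2 / b2"
    and "C2_R4 F" "F 0 = 0"
    and cond_a: "\<exists>p>0. \<forall>w. w \<bullet> grad (Gfun F) w \<ge> (p + 2) * Gfun F w"
    and cond_b: "\<exists>q1 q2 C. 0 < q1 \<and> q1 \<le> q2 \<and> C > 0 \<and>
                   (\<forall>w. norm (hess F w) \<le> C * (norm w powr q1 + norm w powr q2))"
    and cond_c: "\<exists>u v. H2 u \<and> H2 v \<and> Kfun F u v > 0"
    and minseq: "\<And>n. (\<psi>s n, vs n) \<in> Mnz a a2 c c2 b b2 F \<omega>"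
    and conv: "(\<lambda>n. Jom a a2 c c2 b b2 F \<omega> (\<psi>s n) (vs n)) \<longlonglongrightarrow> Sval a a2 c c2 b b2 F \<omega>"
  shows "bounded (range (\<lambda>n. Iom a a2 c c2 b b2 \<omega> (\<psi>s n) (vs n)))
         \<and> (\<exists>L>0. \<exists>r. strict_mono r \<and>
              (\<lambda>n. Iom a a2 c c2 b b2 \<omega> (\<psi>s (r n)) (vs (r n))) \<longlonglongrightarrow> L)"
proof -
  obtain p where p: "p > 0" and AR: "\<forall>w. w \<bullet> grad (Gfun F) w \<ge> (p + 2) * Gfun F w"
    using cond_a by blast
  obtain q1 q2 C where q: "0 < q1" "q1 \<le> q2" and C: "C > 0"
    and hess: "\<forall>w. norm (hess F w) \<le> C * (norm w powr q1 + norm w powr q2)"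
    using cond_b by blast
  have "coercivity_const a a2 c c2 b b2 \<omega> > 0"
    using assms(5,6,8-12) by (rule coercivity_const_pos)
  note setting = assms(5,6) this assms(13,14) p AR q C hess
  have "bounded (range (\<lambda>n. Iom a a2 c c2 b b2 \<omega> (\<psi>s n) (vs n)))"
    using conv by (intro Nehari_sequence_Iom_bounded[OF setting minseq]) (auto simp: convergent_def)
  moreover obtain L0 where "L0 > 0" "\<And>n. L0 \<le> Iom a a2 c c2 b b2 \<omega> (\<psi>s n) (vs n)"
    using Nehari_Iom_uniform_lower_bound[OF setting] minseq by blast
  ultimately show ?thesis
    using bounded_range_imp_subseq_tendsto_pos by blast
qed

end
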